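(* Let $(\{\mathcal M_{A_i}\}_{i=1}^m,\tau)$ be an MCvNA model of a network $\Xi(n,m)$ with maximal independence number $h_{\max}$ (so $\tau$ is a network state), let $2\le h\le h_{\max}$ and $R=\{r_1,\dots,r_h\}\in\Gamma(n,m,h^{D_h})$. If the von Neumann algebras $\mathcal M_{A_{r_1}},\dots,\mathcal M_{A_{r_h}}$ are all abelian, then for all observables $A_{i,0},A_{i,1}\in\mathcal M_{A_i}$, $i=1,\dots,m$, $$|I_\tau|^{1/h}+|J_\tau|^{1/h}\le 2 .$$
   Context: A network $\Xi(n,m)$ consists of $m$ parties $\mathbf A_1,\dots,\mathbf A_m$ and $n$ sources, each source being distributed to some subset of the parties. A set of parties is called independent if no two of its members receive a common source. For an integer $h$, $\Gamma(n,m,h^{D_h})$ denotes the family (of cardinality $D_h$) of all index sets $\{r_1,\dots,r_h\}\subset\{1,\dots,m\}$ such that $\mathbf A_{r_1},\dots,\mathbf A_{r_h}$ are independent; $h_{\max}$ is the largest $h$ for which this family is nonempty, and one always takes $2\le h\le h_{\max}$. MCvNA model of the network: von Neumann algebras $\mathcal M_{A_1},\dots,\mathcal M_{A_m}\subset\mathcal B(H)$ on a common Hilbert space $H$ which mutually commute ($\mathcal M_{A_i}\subset\mathcal M_{A_j}'$ for $i\neq j$), together with a state $\tau$ on $\mathcal M_{A_1A_2\cdots A_m}:=(\mathcal M_{A_1}\vee\cdots\vee\mathcal M_{A_m})''$, called a network state, such that for every $h$ with $2\le h\le h_{\max}$ and every $\{r_1,\dots,r_h\}\in\Gamma(n,m,h^{D_h})$,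 $\tau(A_{r_1}\cdots A_{r_h})=\tau(A_{r_1})\cdots\tau(A_{r_h})$ for all $A_{r_k}\in\mathcal M_{A_{r_k}}$. Observables: for each party $i$, $A_{i,0},A_{i,1}$ are self-adjoint elements of $\mathcal M_{A_i}$ with $-I\le A_{i,x}\le I$. With $R^c=\{1,\dots,m\}\setminus R$: $$I_\tau=\tau\Big(\prod_{i\in R}(A_{i,0}+A_{i,1})\prod_{j\in R^c}A_{j,0}\Big),\qquad J_\tau=\tau\Big(\prod_{i\in R}(A_{i,0}-A_{i,1})\prod_{j\in R^c}A_{j,1}\Big).$$ *)

theory Defs
  imports Complex_Main
begin

text \<open>Complex inner product space; inner product linear in the second argument
 and conjugate-linear in the first (physics convention).\<close>
class complex_inner_space = ab_group_add +
  fixes scaleC :: "complex \<Rightarrow> 'a \<Rightarrow> 'a"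
    and cinner :: "'a \<Rightarrow> 'a \<Rightarrow> complex"
  assumes scaleC_add_right: "scaleC a (x + y) = scaleC a x + scaleC a y"
    and scaleC_add_left: "scaleC (a + b) x = scaleC a x + scaleC b x"
    and scaleC_scaleC: "scaleC a (scaleC b x) = scaleC (a * b) x"
    and scaleC_one: "scaleC 1 x = x"
    and cinner_commute: "cinner x y = cnj (cinner y x)"
    and cinner_add_right: "cinner x (y + z) = cinner x y + cinner x z"
    and cinner_scaleC_right: "cinner x (scaleC a y) = a * cinner x y"
    and cinner_self_nonneg: "Im (cinner x x) = 0 \<and> 0 \<le> Re (cinner x x)"
    and cinner_self_zero: "cinner x x = 0 \<Longrightarrow> x = 0"

definition cnorm :: "'a::complex_inner_space \<Rightarrow> real" where
  "cnorm x = sqrt (Re (cinner x x))"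

class complex_hilbert_space = complex_inner_space +
  assumes cauchy_complete:
    "(\<forall>e>0. \<exists>N::nat. \<forall>p\<ge>N. \<forall>q\<ge>N. sqrt (Re (cinner (X p - X q) (X p - X q))) < e)
       \<Longrightarrow> (\<exists>L. \<forall>e>0. \<exists>N::nat. \<forall>p\<ge>N. sqrt (Re (cinner (X p - L) (X p - L))) < e)"

definition bounded_op :: "('h::complex_hilbert_space \<Rightarrow> 'h) \<Rightarrow> bool" where
  "bounded_op T \<longleftrightarrow>
     (\<forall>x y. T (x + y) = T x + T y) \<and> (\<forall>c x. T (scaleC c x) = scaleC c (T x)) \<and>
     (\<exists>K. \<forall>x. cnorm (T x) \<le> K * cnorm x)"

definition BH :: "('h::complex_hilbert_space \<Rightarrow> 'h) set" where
  "BH = {T. bounded_op T}"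

definition adj :: "('h::complex_hilbert_space \<Rightarrow> 'h) \<Rightarrow> ('h \<Rightarrow> 'h)" where
  "adj T = (SOME S. bounded_op S \<and> (\<forall>x y. cinner (T x) y = cinner x (S y)))"

definition op_add :: "('h::complex_hilbert_space \<Rightarrow> 'h) \<Rightarrow> ('h \<Rightarrow> 'h) \<Rightarrow> ('h \<Rightarrow> 'h)" where
  "op_add S T = (\<lambda>x. S x + T x)"

definition op_diff :: "('h::complex_hilbert_space \<Rightarrow> 'h) \<Rightarrow> ('h \<Rightarrow> 'h) \<Rightarrow> ('h \<Rightarrow> 'h)" where
  "op_diff S T = (\<lambda>x. S x - T x)"

definition op_scale :: "complex \<Rightarrow> ('h::complex_hilbert_space \<Rightarrow> 'h) \<Rightarrow> ('h \<Rightarrow> 'h)" where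
  "op_scale c T = (\<lambda>x. scaleC c (T x))"

definition commutant :: "('h::complex_hilbert_space \<Rightarrow> 'h) set \<Rightarrow> ('h \<Rightarrow> 'h) set" where
  "commutant M = {T \<in> BH. \<forall>S\<in>M. T \<circ> S = S \<circ> T}"

definition von_neumann_algebra :: "('h::complex_hilbert_space \<Rightarrow> 'h) set \<Rightarrow> bool" where
  "von_neumann_algebra M \<longleftrightarrow>
     M \<subseteq> BH \<and> (\<forall>T\<in>M. adj T \<in> M) \<and> commutant (commutant M) = M"

definition abelian :: "('h \<Rightarrow> 'h) set \<Rightarrow> bool" where
  "abelian M \<longleftrightarrow> (\<forall>S\<in>M. \<forall>T\<in>M. S \<circ> T = T \<circ> S)"

definition positive_op :: "('h::complex_hilbert_space \<Rightarrow> 'h) \<Rightarrow> bool" where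
  "positive_op P \<longleftrightarrow> (\<forall>x. Im (cinner x (P x)) = 0 \<and> 0 \<le> Re (cinner x (P x)))"

definition op_le :: "('h::complex_hilbert_space \<Rightarrow> 'h) \<Rightarrow> ('h \<Rightarrow> 'h) \<Rightarrow> bool" where
  "op_le S T \<longleftrightarrow> positive_op (op_diff T S)"

definition observable :: "('h::complex_hilbert_space \<Rightarrow> 'h) set \<Rightarrow> ('h \<Rightarrow> 'h) \<Rightarrow> bool" where
  "observable M A \<longleftrightarrow> A \<in> M \<and> adj A = A \<and>
     op_le (op_scale (-1) id) A \<and> op_le A id"

definition is_state :: "('h::complex_hilbert_space \<Rightarrow> 'h) set \<Rightarrow> (('h \<Rightarrow> 'h) \<Rightarrow> complex) \<Rightarrow> bool" where
  "is_state M \<tau> \<longleftrightarrow>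
     (\<forall>S\<in>M. \<forall>T\<in>M. \<tau> (op_add S T) = \<tau> S + \<tau> T) \<and>
     (\<forall>c. \<forall>T\<in>M. \<tau> (op_scale c T) = c * \<tau> T) \<and>
     (\<forall>T\<in>M. Im (\<tau> (adj T \<circ> T)) = 0 \<and> 0 \<le> Re (\<tau> (adj T \<circ> T))) \<and>
     \<tau> id = 1"

definition oprod :: "nat set \<Rightarrow> (nat \<Rightarrow> ('h \<Rightarrow> 'h)) \<Rightarrow> ('h \<Rightarrow> 'h)" where
  "oprod S A = foldr (\<circ>) (map A (sorted_list_of_set S)) id"

text \<open>Network Xi(n,m): parties 1..m, sources 1..n; src k is the set of parties
  receiving source k.\<close>
definition network :: "nat \<Rightarrow> nat \<Rightarrow> (nat \<Rightarrow> nat set) \<Rightarrow> bool" where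
  "network n m src \<longleftrightarrow> (\<forall>k\<in>{1..n}. src k \<subseteq> {1..m})"

definition independent :: "nat \<Rightarrow> (nat \<Rightarrow> nat set) \<Rightarrow> nat set \<Rightarrow> bool" where
  "independent n src S \<longleftrightarrow>
     (\<forall>i\<in>S. \<forall>j\<in>S. i \<noteq> j \<longrightarrow> \<not> (\<exists>k\<in>{1..n}. i \<in> src k \<and> j \<in> src k))"

definition Gamma :: "nat \<Rightarrow> nat \<Rightarrow> (nat \<Rightarrow> nat set) \<Rightarrow> nat \<Rightarrow> nat set set" where
  "Gamma n m src h = {S. S \<subseteq> {1..m} \<and> card S = h \<and> independent n src S}"

definition h_max :: "nat \<Rightarrow> nat \<Rightarrow> (nat \<Rightarrow> nat set) \<Rightarrow> nat" where
  "h_max n m src = Max {h. Gamma n m src h \<noteq> {}}"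

definition join_vNA :: "nat \<Rightarrow> (nat \<Rightarrow> ('h::complex_hilbert_space \<Rightarrow> 'h) set) \<Rightarrow> ('h \<Rightarrow> 'h) set" where
  "join_vNA m M = commutant (commutant (\<Union>i\<in>{1..m}. M i))"

definition MCvNA_model :: "nat \<Rightarrow> nat \<Rightarrow> (nat \<Rightarrow> nat set) \<Rightarrow>
    (nat \<Rightarrow> ('h::complex_hilbert_space \<Rightarrow> 'h) set) \<Rightarrow> (('h \<Rightarrow> 'h) \<Rightarrow> complex) \<Rightarrow> bool" where
  "MCvNA_model n m src M \<tau> \<longleftrightarrow>
     (\<forall>i\<in>{1..m}. von_neumann_algebra (M i)) \<and>
     (\<forall>i\<in>{1..m}. \<forall>j\<in>{1..m}. i \<noteq> j \<longrightarrow> M i \<subseteq> commutant (M j)) \<and>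
     is_state (join_vNA m M) \<tau> \<and>
     (\<forall>h. 2 \<le> h \<and> h \<le> h_max n m src \<longrightarrow>
        (\<forall>R\<in>Gamma n m src h. \<forall>A. (\<forall>k\<in>R. A k \<in> M k) \<longrightarrow>
            \<tau> (oprod R A) = (\<Prod>k\<in>R. \<tau> (A k))))"

definition I_tau :: "nat \<Rightarrow> (('h::complex_hilbert_space \<Rightarrow> 'h) \<Rightarrow> complex) \<Rightarrow> nat set \<Rightarrow>
    (nat \<Rightarrow> 'h \<Rightarrow> 'h) \<Rightarrow> (nat \<Rightarrow> 'h \<Rightarrow> 'h) \<Rightarrow> complex" where
  "I_tau m \<tau> R A0 A1 =
     \<tau> (oprod {1..m} (\<lambda>i. if i \<in> R then op_add (A0 i) (A1 i) else A0 i))"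

definition J_tau :: "nat \<Rightarrow> (('h::complex_hilbert_space \<Rightarrow> 'h) \<Rightarrow> complex) \<Rightarrow> nat set \<Rightarrow>
    (nat \<Rightarrow> 'h \<Rightarrow> 'h) \<Rightarrow> (nat \<Rightarrow> 'h \<Rightarrow> 'h) \<Rightarrow> complex" where
  "J_tau m \<tau> R A0 A1 =
     \<tau> (oprod {1..m} (\<lambda>i. if i \<in> R then op_diff (A0 i) (A1 i) else A1 i))"

end

theory Submission
  imports Defs "HOL-Analysis.Convex" "HOL-Analysis.Elementary_Normed_Spaces"
begin

text \<open>For every party \<open>i\<close> choose commuting hermitian \<open>P\<^sub>i, N\<^sub>i\<close> in its algebra such that
  \<open>P\<^sub>i\<^sup>2 - N\<^sub>i\<^sup>2\<close> is the factor of the correlator (\<open>A\<^sub>i\<^sub>,\<^sub>0 \<plusminus> A\<^sub>i\<^sub>,\<^sub>1\<close> for \<open>i \<in> R\<close>,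
  a single observable otherwise) and \<open>P\<^sub>i\<^sup>2 + N\<^sub>i\<^sup>2\<close> is \<open>1 \<plusminus> A\<^sub>i\<^sub>,\<^sub>0 A\<^sub>i\<^sub>,\<^sub>1\<close> for \<open>i \<in> R\<close> and \<open>1\<close>
  otherwise; for \<open>i \<in> R\<close> this needs \<open>A\<^sub>i\<^sub>,\<^sub>0\<close> and \<open>A\<^sub>i\<^sub>,\<^sub>1\<close> to commute, which is where
  abelianness enters, and the square roots come from the iteration \<open>Y \<mapsto> (A + Y\<^sup>2) / 2\<close>.
  All these operators commute, so \<open>\<Prod>\<^sub>i (P\<^sub>i\<^sup>2 - N\<^sub>i\<^sup>2)\<close> is a signed sum of squares of hermitian
  operators and \<open>\<Prod>\<^sub>i (P\<^sub>i\<^sup>2 + N\<^sub>i\<^sup>2)\<close> the same sum with all signs positive. Hence, by the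
  independence of \<open>R\<close>, \<open>\<bar>I\<^sub>\<tau>\<bar> \<le> \<Prod>\<^sub>k\<^sub>\<in>\<^sub>R \<alpha>\<^sub>k\<close> and \<open>\<bar>J\<^sub>\<tau>\<bar> \<le> \<Prod>\<^sub>k\<^sub>\<in>\<^sub>R \<beta>\<^sub>k\<close> with
  \<open>\<alpha>\<^sub>k = \<tau>(1 + A\<^sub>k\<^sub>,\<^sub>0 A\<^sub>k\<^sub>,\<^sub>1) \<ge> 0\<close>, \<open>\<beta>\<^sub>k = \<tau>(1 - A\<^sub>k\<^sub>,\<^sub>0 A\<^sub>k\<^sub>,\<^sub>1) \<ge> 0\<close> and
  \<open>\<alpha>\<^sub>k + \<beta>\<^sub>k = 2\<close>, and the AM-GM inequality gives
  \<open>\<bar>I\<^sub>\<tau>\<bar>\<^sup>1\<^sup>/\<^sup>h + \<bar>J\<^sub>\<tau>\<bar>\<^sup>1\<^sup>/\<^sup>h \<le> \<Sum>\<^sub>k (\<alpha>\<^sub>k + \<beta>\<^sub>k) / h = 2\<close>.\<close>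

lemma scaleC_zero_left [simp]: "scaleC 0 (x::'a::complex_inner_space) = 0"
proof -
  have "scaleC 0 x = scaleC 0 x + scaleC 0 x" using scaleC_add_left[of 0 0 x] by simp
  then show ?thesis by simp
qed

lemma scaleC_zero_right [simp]: "scaleC c (0::'a::complex_inner_space) = 0"
proof -
  have "scaleC c (0::'a) = scaleC c 0 + scaleC c 0" using scaleC_add_right[of c 0 0] by simp
  then show ?thesis by simp
qed

lemma scaleC_minus_right: "scaleC c (- (x::'a::complex_inner_space)) = - scaleC c x"
proof -
  have "scaleC c (-x) + scaleC c x = 0" using scaleC_add_right[of c "-x" x] by simp
  then show ?thesis by (simp add: eq_neg_iff_add_eq_0)
qed

lemma scaleC_diff_right: "scaleC c ((x::'a::complex_inner_space) - y) = scaleC c x - scaleC c y"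
  using scaleC_add_right[of c x "-y"] by (simp add: scaleC_minus_right)

lemma scaleC_minus_left: "scaleC (-c) (x::'a::complex_inner_space) = - scaleC c x"
proof -
  have "scaleC (-c) x + scaleC c x = 0" using scaleC_add_left[of "-c" c x] by simp
  then show ?thesis by (simp add: eq_neg_iff_add_eq_0)
qed

lemma scaleC_minus_one [simp]: "scaleC (-1) (x::'a::complex_inner_space) = - x"
  by (simp add: scaleC_minus_left scaleC_one)

lemma scaleC_half_double: "scaleC (1/2) (x::'a::complex_inner_space) + scaleC (1/2) x = x"
  using scaleC_add_left[of "1/2" "1/2" x] by (simp add: scaleC_one)

lemma cinner_add_left: "cinner ((x::'a::complex_inner_space) + y) z = cinner x z + cinner y z"
  by (subst (1 2 3) cinner_commute) (simp add: cinner_add_right)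

lemma cinner_scaleC_left: "cinner (scaleC a (x::'a::complex_inner_space)) y = cnj a * cinner x y"
  by (subst (1 2) cinner_commute) (simp add: cinner_scaleC_right)

lemma cinner_zero_right [simp]: "cinner (x::'a::complex_inner_space) 0 = 0"
  using cinner_scaleC_right[of x 0 0] by simp

lemma cinner_zero_left [simp]: "cinner 0 (x::'a::complex_inner_space) = 0"
  using cinner_scaleC_left[of 0 0 x] by simp

lemma cinner_minus_right: "cinner (x::'a::complex_inner_space) (- y) = - cinner x y"
  using cinner_scaleC_right[of x "-1" y] by simp

lemma cinner_minus_left: "cinner (- (x::'a::complex_inner_space)) y = - cinner x y"
  using cinner_scaleC_left[of "-1" x y] by simp

lemma cinner_diff_right: "cinner (x::'a::complex_inner_space) (y - z) = cinner x y - cinner x z"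
  using cinner_add_right[of x y "-z"] by (simp add: cinner_minus_right)

lemma cinner_diff_left: "cinner ((x::'a::complex_inner_space) - y) z = cinner x z - cinner y z"
  using cinner_add_left[of x "-y" z] by (simp add: cinner_minus_left)

lemma cinner_self_real: "cinner (x::'a::complex_inner_space) x = complex_of_real (Re (cinner x x))"
  using cinner_self_nonneg[of x] by (simp add: complex_eq_iff)

lemma cinner_eqI:
  assumes "\<And>z. cinner z (u::'a::complex_inner_space) = cinner z v" shows "u = v"
proof -
  have "cinner (u - v) (u - v) = 0" using assms[of "u - v"] by (simp add: cinner_diff_right)
  then show ?thesis using cinner_self_zero[of "u - v"] by simp
qed

lemma cnorm_nonneg [simp]: "0 \<le> cnorm (x::'a::complex_inner_space)"
  unfolding cnorm_def using cinner_self_nonneg[of x] by simp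

lemma cnorm_square: "(cnorm (x::'a::complex_inner_space))\<^sup>2 = Re (cinner x x)"
  unfolding cnorm_def by (rule real_sqrt_pow2) (use cinner_self_nonneg[of x] in blast)

lemma cinner_self_cnorm: "cinner (x::'a::complex_inner_space) x = complex_of_real ((cnorm x)\<^sup>2)"
  by (metis cinner_self_real cnorm_square)

lemma cnorm_zero [simp]: "cnorm (0::'a::complex_inner_space) = 0"
  by (simp add: cnorm_def)

lemma cnorm_eq_0: "cnorm (x::'a::complex_inner_space) = 0 \<longleftrightarrow> x = 0"
proof
  assume "cnorm x = 0"
  then have "cinner x x = 0" by (simp add: cinner_self_cnorm)
  then show "x = 0" by (rule cinner_self_zero)
qed simp

lemma cnorm_scaleC: "cnorm (scaleC c (x::'a::complex_inner_space)) = cmod c * cnorm x"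
proof -
  have "cinner (scaleC c x) (scaleC c x) = cnj c * c * cinner x x"
    by (simp add: cinner_scaleC_left cinner_scaleC_right)
  also have "cnj c * c = complex_of_real ((cmod c)\<^sup>2)"
    by (simp add: complex_norm_square[symmetric] mult.commute)
  finally have "Re (cinner (scaleC c x) (scaleC c x)) = (cmod c)\<^sup>2 * (cnorm x)\<^sup>2"
    by (simp add: cinner_self_cnorm)
  then have "(cnorm (scaleC c x))\<^sup>2 = (cmod c * cnorm x)\<^sup>2"
    by (simp add: cnorm_square power_mult_distrib)
  then show ?thesis
    using power2_eq_imp_eq by (metis cnorm_nonneg norm_ge_zero zero_le_mult_iff)
qed

lemma cnorm_minus [simp]: "cnorm (- (x::'a::complex_inner_space)) = cnorm x"
  using cnorm_scaleC[of "-1" x] by simp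

lemma cnorm_minus_commute: "cnorm ((x::'a::complex_inner_space) - y) = cnorm (y - x)"
  using cnorm_minus[of "x - y"] by simp

lemma cinner_cauchy_schwarz: "cmod (cinner (x::'a::complex_inner_space) y) \<le> cnorm x * cnorm y"
proof (cases "y = 0")
  case True then show ?thesis by simp
next
  case False
  define r where "r = Re (cinner y y)"
  have r: "r > 0" using False cnorm_eq_0[of y] cnorm_square[of y] unfolding r_def
    by (metis cnorm_nonneg less_eq_real_def zero_less_power2)
  have ry: "cinner y y = complex_of_real r" unfolding r_def by (rule cinner_self_real)
  define t where "t = cinner y x / r"
  have "cinner (x - scaleC t y) (x - scaleC t y)
      = cinner x x - t * cinner x y - cnj t * cinner y x + cnj t * t * cinner y y"
    by (simp add: cinner_diff_left cinner_diff_right cinner_scaleC_left cinner_scaleC_right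
        algebra_simps)
  also have "\<dots> = cinner x x - cinner y x * cnj (cinner y x) / r"
    using r unfolding t_def ry by (simp add: field_simps) (metis cinner_commute)
  finally have eq: "cinner (x - scaleC t y) (x - scaleC t y)
      = cinner x x - cinner y x * cnj (cinner y x) / r" .
  have "0 \<le> Re (cinner (x - scaleC t y) (x - scaleC t y))" using cinner_self_nonneg by blast
  also have "\<dots> = Re (cinner x x) - (cmod (cinner y x))\<^sup>2 / r"
    unfolding eq by (simp add: complex_norm_square[symmetric])
  finally have "(cmod (cinner y x))\<^sup>2 \<le> Re (cinner x x) * r" using r by (simp add: field_simps)
  also have "\<dots> = (cnorm x * cnorm y)\<^sup>2" by (simp add: r_def cnorm_square power_mult_distrib)
  finally have "(cmod (cinner x y))\<^sup>2 \<le> (cnorm x * cnorm y)\<^sup>2"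
    by (metis cinner_commute complex_mod_cnj)
  then show ?thesis by (rule power2_le_imp_le) simp
qed

lemma cnorm_triangle: "cnorm ((x::'a::complex_inner_space) + y) \<le> cnorm x + cnorm y"
proof -
  have "cinner (x + y) (x + y) = cinner x x + cinner y y + (cinner x y + cnj (cinner x y))"
    by (simp add: cinner_add_left cinner_add_right) (metis cinner_commute)
  then have "(cnorm (x + y))\<^sup>2 = Re (cinner x x) + Re (cinner y y) + 2 * Re (cinner x y)"
    by (simp add: cnorm_square)
  also have "\<dots> \<le> (cnorm x)\<^sup>2 + (cnorm y)\<^sup>2 + 2 * (cnorm x * cnorm y)"
    using cinner_cauchy_schwarz[of x y] abs_Re_le_cmod[of "cinner x y"] by (simp add: cnorm_square)
  also have "\<dots> = (cnorm x + cnorm y)\<^sup>2" by (simp add: power2_eq_square algebra_simps)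
  finally show ?thesis by (rule power2_le_imp_le) simp
qed

lemma cnorm_triangle_diff:
  "cnorm ((x::'a::complex_inner_space) - z) \<le> cnorm (x - y) + cnorm (y - z)"
  using cnorm_triangle[of "x - y" "y - z"] by simp

lemma cnorm_diff_le: "cnorm ((x::'a::complex_inner_space) - y) \<le> cnorm x + cnorm y"
  using cnorm_triangle[of x "-y"] by simp

lemma cnorm_reverse_triangle: "\<bar>cnorm (x::'a::complex_inner_space) - cnorm y\<bar> \<le> cnorm (x - y)"
  using cnorm_triangle[of "x - y" y] cnorm_triangle[of "y - x" x] cnorm_minus_commute[of x y]
  by auto


definition linear_op :: "('a::complex_inner_space \<Rightarrow> 'a) \<Rightarrow> bool" where
  "linear_op T \<longleftrightarrow> (\<forall>x y. T (x + y) = T x + T y) \<and> (\<forall>c x. T (scaleC c x) = scaleC c (T x))"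

definition hermitian :: "('h::complex_hilbert_space \<Rightarrow> 'h) \<Rightarrow> bool" where
  "hermitian T \<longleftrightarrow> bounded_op T \<and> (\<forall>x y. cinner (T x) y = cinner x (T y))"

definition contraction :: "('a::complex_inner_space \<Rightarrow> 'a) \<Rightarrow> bool" where
  "contraction T \<longleftrightarrow> (\<forall>x. cnorm (T x) \<le> cnorm x)"

lemma linear_op_add: "linear_op T \<Longrightarrow> T (x + y) = T x + T y"
  by (simp add: linear_op_def)

lemma linear_op_scaleC: "linear_op T \<Longrightarrow> T (scaleC c x) = scaleC c (T x)"
  by (simp add: linear_op_def)

lemma linear_op_zero: "linear_op T \<Longrightarrow> T 0 = 0"
  using linear_op_scaleC[of T 0 0] by simp

lemma linear_op_minus: "linear_op T \<Longrightarrow> T (- x) = - T x"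
  using linear_op_scaleC[of T "-1" x] by simp

lemma linear_op_diff: "linear_op T \<Longrightarrow> T (x - y) = T x - T y"
  using linear_op_add[of T x "-y"] linear_op_minus[of T y] by simp

lemma bounded_op_linear: "bounded_op T \<Longrightarrow> linear_op T"
  by (simp add: bounded_op_def linear_op_def)

lemma bounded_opI:
  assumes "linear_op T" "\<And>x. cnorm (T x) \<le> K * cnorm x"
  shows "bounded_op T"
  using assms unfolding bounded_op_def linear_op_def by blast

lemma bounded_op_bound:
  assumes "bounded_op T" shows "\<exists>K\<ge>0. \<forall>x. cnorm (T x) \<le> K * cnorm x"
proof -
  obtain K where K: "\<forall>x. cnorm (T x) \<le> K * cnorm x" using assms by (auto simp: bounded_op_def)
  have "cnorm (T x) \<le> \<bar>K\<bar> * cnorm x" for x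
    using K[rule_format, of x] by (meson abs_ge_self cnorm_nonneg mult_right_mono order_trans)
  then show ?thesis by (intro exI[of _ "\<bar>K\<bar>"]) simp
qed

lemma bounded_op_id: "bounded_op (id :: 'h::complex_hilbert_space \<Rightarrow> 'h)"
  by (rule bounded_opI[where K=1]) (auto simp: linear_op_def)

lemma bounded_op_comp:
  assumes "bounded_op S" "bounded_op T" shows "bounded_op (S \<circ> T)"
proof -
  obtain K where K: "K \<ge> 0" "\<forall>x. cnorm (S x) \<le> K * cnorm x" using bounded_op_bound[OF assms(1)]
    by blast
  obtain L where L: "L \<ge> 0" "\<forall>x. cnorm (T x) \<le> L * cnorm x" using bounded_op_bound[OF assms(2)]
    by blast
  have "cnorm (S (T x)) \<le> (K * L) * cnorm x" for x
    using K(2)[rule_format, of "T x"] mult_left_mono[OF L(2)[rule_format, of x] K(1)] by simp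
  moreover have "linear_op (S \<circ> T)" using assms[THEN bounded_op_linear]
    by (simp add: linear_op_def)
  ultimately show ?thesis by (intro bounded_opI[where K="K * L"]) auto
qed

lemma bounded_op_add:
  assumes "bounded_op S" "bounded_op T" shows "bounded_op (op_add S T)"
proof -
  obtain K where K: "K \<ge> 0" "\<forall>x. cnorm (S x) \<le> K * cnorm x" using bounded_op_bound[OF assms(1)]
    by blast
  obtain L where L: "L \<ge> 0" "\<forall>x. cnorm (T x) \<le> L * cnorm x" using bounded_op_bound[OF assms(2)]
    by blast
  have "cnorm (S x + T x) \<le> (K + L) * cnorm x" for x
    using cnorm_triangle[of "S x" "T x"] K(2)[rule_format, of x] L(2)[rule_format, of x]
    by (simp add: distrib_right)
  moreover have "linear_op (op_add S T)" using assms[THEN bounded_op_linear]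
    by (simp add: linear_op_def op_add_def scaleC_add_right algebra_simps)
  ultimately show ?thesis by (intro bounded_opI[where K="K + L"]) (auto simp: op_add_def)
qed

lemma bounded_op_scale:
  assumes "bounded_op T" shows "bounded_op (op_scale c T)"
proof -
  obtain K where K: "K \<ge> 0" "\<forall>x. cnorm (T x) \<le> K * cnorm x" using bounded_op_bound[OF assms]
    by blast
  have "cnorm (scaleC c (T x)) \<le> (cmod c * K) * cnorm x" for x
    using K by (simp add: cnorm_scaleC mult.assoc mult_left_mono)
  moreover have "linear_op (op_scale c T)" using bounded_op_linear[OF assms]
    by (simp add: linear_op_def op_scale_def scaleC_add_right scaleC_scaleC mult.commute)
  ultimately show ?thesis by (intro bounded_opI[where K="cmod c * K"]) (auto simp: op_scale_def)
qed

lemma op_diff_eq_add_scale: "op_diff S T = op_add S (op_scale (-1) T)"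
  by (simp add: op_diff_def op_add_def op_scale_def fun_eq_iff)

lemma hermitian_linear_op: "hermitian T \<Longrightarrow> linear_op T"
  by (simp add: hermitian_def bounded_op_linear)

lemma hermitian_adj: "hermitian T \<Longrightarrow> adj T = T"
proof -
  assume T: "hermitian T"
  then have "\<exists>S. bounded_op S \<and> (\<forall>x y. cinner (T x) y = cinner x (S y))"
    by (auto simp: hermitian_def)
  then have S: "\<forall>x y. cinner (T x) y = cinner x (adj T y)"
    unfolding adj_def by (rule someI2_ex) blast
  have "adj T y = T y" for y
    by (rule cinner_eqI) (use S T in \<open>auto simp: hermitian_def\<close>)
  then show ?thesis by auto
qed

lemma hermitian_comp:
  assumes "hermitian S" "hermitian T" "S \<circ> T = T \<circ> S" shows "hermitian (S \<circ> T)"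
proof -
  have "cinner (S (T x)) y = cinner x (S (T y))" for x y
  proof -
    have "cinner (S (T x)) y = cinner x (T (S y))" using assms(1,2) by (simp add: hermitian_def)
    also have "T (S y) = S (T y)" using assms(3) by (metis comp_apply)
    finally show ?thesis .
  qed
  then show ?thesis using assms by (simp add: hermitian_def bounded_op_comp)
qed

lemma hermitian_add:
  assumes "hermitian S" "hermitian T" shows "hermitian (op_add S T)"
proof -
  have "cinner (S x + T x) y = cinner x (S y + T y)" for x y
    using assms by (simp add: hermitian_def cinner_add_left cinner_add_right)
  then show ?thesis
    using assms bounded_op_add[of S T] unfolding hermitian_def by (simp add: op_add_def)
qed

lemma hermitian_scale_real:
  assumes "hermitian T" shows "hermitian (op_scale (complex_of_real r) T)"
proof -
  have "cinner (scaleC (complex_of_real r) (T x)) y = cinner x (scaleC (complex_of_real r) (T y))"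
    for x y
    using assms by (simp add: hermitian_def cinner_scaleC_left cinner_scaleC_right)
  then show ?thesis
    using assms bounded_op_scale[of T "complex_of_real r"] unfolding hermitian_def
    by (simp add: op_scale_def)
qed

lemma hermitian_diff:
  assumes "hermitian S" "hermitian T" shows "hermitian (op_diff S T)"
  unfolding op_diff_eq_add_scale
  using hermitian_add[OF assms(1) hermitian_scale_real[OF assms(2), of "-1"]] by simp

lemma hermitian_id: "hermitian (id :: 'h::complex_hilbert_space \<Rightarrow> 'h)"
  by (simp add: hermitian_def bounded_op_id)

lemma hermitian_zero: "hermitian (\<lambda>x::'h::complex_hilbert_space. 0)"
proof -
  have "bounded_op (\<lambda>x::'h. 0)"
    by (rule bounded_opI[where K=0]) (simp_all add: linear_op_def)
  then show ?thesis by (simp add: hermitian_def)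
qed

lemma contraction_zero: "contraction (\<lambda>x::'a::complex_inner_space. 0)"
  by (simp add: contraction_def)

lemma contraction_scale_minus_one: "contraction T \<Longrightarrow> contraction (op_scale (-1) T)"
  by (simp add: contraction_def op_scale_def)

definition op_algebra :: "('h::complex_hilbert_space \<Rightarrow> 'h) set \<Rightarrow> bool" where
  "op_algebra A \<longleftrightarrow> id \<in> A \<and> (\<forall>S\<in>A. \<forall>T\<in>A. S \<circ> T \<in> A \<and> op_add S T \<in> A) \<and>
     (\<forall>c. \<forall>T\<in>A. op_scale c T \<in> A)"

lemma op_algebra_id: "op_algebra A \<Longrightarrow> id \<in> A"
  by (simp add: op_algebra_def)

lemma op_algebra_comp: "op_algebra A \<Longrightarrow> S \<in> A \<Longrightarrow> T \<in> A \<Longrightarrow> S \<circ> T \<in> A"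
  by (simp add: op_algebra_def)

lemma op_algebra_add: "op_algebra A \<Longrightarrow> S \<in> A \<Longrightarrow> T \<in> A \<Longrightarrow> op_add S T \<in> A"
  by (simp add: op_algebra_def)

lemma op_algebra_scale: "op_algebra A \<Longrightarrow> T \<in> A \<Longrightarrow> op_scale c T \<in> A"
  by (simp add: op_algebra_def)

lemma op_algebra_diff: "op_algebra A \<Longrightarrow> S \<in> A \<Longrightarrow> T \<in> A \<Longrightarrow> op_diff S T \<in> A"
  unfolding op_diff_eq_add_scale by (intro op_algebra_add op_algebra_scale)

lemma op_algebra_foldr:
  assumes "op_algebra A" "\<forall>i\<in>set L. f i \<in> A"
  shows "foldr (\<circ>) (map f L) id \<in> A"
  using assms(2) by (induction L) (auto intro: op_algebra_comp op_algebra_id assms(1))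

lemma commutant_bounded: "commutant Q \<subseteq> BH"
  by (auto simp: commutant_def)

lemma commutant_antimono: "X \<subseteq> Y \<Longrightarrow> commutant Y \<subseteq> commutant X"
  by (auto simp: commutant_def)

lemma commutantD: "T \<in> commutant Q \<Longrightarrow> S \<in> Q \<Longrightarrow> T \<circ> S = S \<circ> T"
  by (simp add: commutant_def)

lemma op_algebra_commutant:
  assumes "Q \<subseteq> BH" shows "op_algebra (commutant Q)"
proof -
  have lin: "linear_op U" if "U \<in> Q" for U
    using that assms by (auto simp: BH_def bounded_op_linear)
  have "id \<in> commutant Q"
    by (simp add: commutant_def BH_def bounded_op_id)
  moreover have "S \<circ> T \<in> commutant Q" if "S \<in> commutant Q" "T \<in> commutant Q" for S T
    using that unfolding commutant_def BH_def
    by (auto intro: bounded_op_comp simp: comp_assoc) (metis comp_assoc)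
  moreover have "op_add S T \<in> commutant Q" if "S \<in> commutant Q" "T \<in> commutant Q" for S T
  proof -
    have "op_add S T \<circ> U = U \<circ> op_add S T" if "U \<in> Q" for U
      using \<open>U \<in> Q\<close> commutantD[OF \<open>S \<in> commutant Q\<close>] commutantD[OF \<open>T \<in> commutant Q\<close>]
        linear_op_add[OF lin[OF \<open>U \<in> Q\<close>]]
      by (auto simp: op_add_def fun_eq_iff)
    then show ?thesis using that by (auto simp: commutant_def BH_def intro: bounded_op_add)
  qed
  moreover have "op_scale c T \<in> commutant Q" if "T \<in> commutant Q" for c T
  proof -
    have "op_scale c T \<circ> U = U \<circ> op_scale c T" if "U \<in> Q" for U
      using \<open>U \<in> Q\<close> commutantD[OF \<open>T \<in> commutant Q\<close>] linear_op_scaleC[OF lin[OF \<open>U \<in> Q\<close>]]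
      by (auto simp: op_scale_def fun_eq_iff)
    then show ?thesis using that by (auto simp: commutant_def BH_def intro: bounded_op_scale)
  qed
  ultimately show ?thesis by (simp add: op_algebra_def)
qed

lemma subset_bicommutant: "X \<subseteq> BH \<Longrightarrow> X \<subseteq> commutant (commutant X)"
  by (auto simp: commutant_def)

lemma bicommutant_least:
  assumes "X \<subseteq> commutant (commutant Y)"
  shows "commutant (commutant X) \<subseteq> commutant (commutant Y)"
proof -
  have "commutant Y \<subseteq> commutant (commutant (commutant Y))"
    by (rule subset_bicommutant[OF commutant_bounded])
  also have "\<dots> \<subseteq> commutant X"
    by (rule commutant_antimono[OF assms])
  finally show ?thesis by (rule commutant_antimono)
qed

lemma abelian_subset_commutant: "X \<subseteq> BH \<Longrightarrow> abelian X \<Longrightarrow> X \<subseteq> commutant X"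
  by (auto simp: commutant_def abelian_def)

lemma abelian_bicommutant:
  assumes "X \<subseteq> BH" "abelian X" shows "abelian (commutant (commutant X))"
proof -
  have "X \<subseteq> commutant X" by (rule abelian_subset_commutant[OF assms])
  then have "commutant (commutant X) \<subseteq> commutant X"
    by (rule commutant_antimono)
  then show ?thesis by (auto simp: abelian_def commutant_def)
qed

lemma abelian_insert:
  assumes "abelian F" "T \<in> commutant F" shows "abelian (insert T F)"
  using assms by (auto simp: abelian_def commutant_def)

lemma von_neumann_algebra_bounded: "von_neumann_algebra M \<Longrightarrow> M \<subseteq> BH"
  by (simp add: von_neumann_algebra_def)

lemma von_neumann_algebra_op_algebra: "von_neumann_algebra M \<Longrightarrow> op_algebra M"
  by (metis von_neumann_algebra_def op_algebra_commutant commutant_bounded)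

lemma von_neumann_algebra_bicommutant_subset:
  "von_neumann_algebra M \<Longrightarrow> X \<subseteq> M \<Longrightarrow> commutant (commutant X) \<subseteq> M"
  by (metis von_neumann_algebra_def bicommutant_least)

lemma real_form_hermitian:
  assumes T: "linear_op T" and real: "\<And>z. Im (cinner z (T z)) = 0"
  shows "cinner (T x) y = cinner x (T y)"
proof -
  define u where "u = cinner x (T y)"
  define v where "v = cinner y (T x)"
  have "cinner (x + y) (T (x + y)) = cinner x (T x) + cinner y (T y) + u + v"
    by (simp add: linear_op_add[OF T] cinner_add_left cinner_add_right u_def v_def)
  then have "Im (u + v) = 0" using real[of "x + y"] real[of x] real[of y] by simp
  moreover have "cinner (x + scaleC \<i> y) (T (x + scaleC \<i> y))
      = cinner x (T x) + cinner y (T y) + \<i> * u - \<i> * v"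
    by (simp add: linear_op_add[OF T] linear_op_scaleC[OF T] cinner_add_left cinner_add_right
        cinner_scaleC_left cinner_scaleC_right u_def v_def algebra_simps)
  then have "Re (u - v) = 0" using real[of "x + scaleC \<i> y"] real[of x] real[of y] by simp
  ultimately have "u = cnj v" by (simp add: complex_eq_iff)
  then show ?thesis by (simp add: u_def v_def) (metis cinner_commute)
qed

text \<open>With \<open>w = t \<cdot> T x\<close>, the forms at \<open>x \<plusminus> w\<close> differ by \<open>4 t \<parallel>T x\<parallel>\<^sup>2\<close> and are
  bounded by \<open>\<parallel>x \<plusminus> w\<parallel>\<^sup>2\<close>, whose sum is \<open>2 \<parallel>x\<parallel>\<^sup>2 + 2 t\<^sup>2 \<parallel>T x\<parallel>\<^sup>2\<close>.\<close>
lemma form_bounded_polarization: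
  assumes T: "linear_op T" and sym: "\<And>x y. cinner (T x) y = cinner x (T y)"
    and bound: "\<And>z. \<bar>Re (cinner z (T z))\<bar> \<le> (cnorm z)\<^sup>2" and "t > 0"
  shows "4 * t * (cnorm (T x))\<^sup>2 \<le> 2 * (cnorm x)\<^sup>2 + 2 * t\<^sup>2 * (cnorm (T x))\<^sup>2"
proof -
  define w where "w = scaleC (complex_of_real t) (T x)"
  have form: "cinner (x + scaleC s w) (T (x + scaleC s w)) =
      cinner x (T x) + s * cinner x (T w) + cnj s * cinner w (T x) + cnj s * s * cinner w (T w)"
    for s
    by (simp add: linear_op_add[OF T] linear_op_scaleC[OF T] cinner_add_left cinner_add_right
        cinner_scaleC_left cinner_scaleC_right algebra_simps)
  have sq: "cinner (x + scaleC s w) (x + scaleC s w) =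
      cinner x x + s * cinner x w + cnj s * cinner w x + cnj s * s * cinner w w" for s
    by (simp add: cinner_add_left cinner_add_right cinner_scaleC_left cinner_scaleC_right
        algebra_simps)
  have "cinner x (T w) = complex_of_real (t * (cnorm (T x))\<^sup>2)"
    using sym[of x w]
    by (simp add: w_def linear_op_scaleC[OF T] cinner_scaleC_right cinner_self_cnorm) metis
  moreover have "cinner w (T x) = complex_of_real (t * (cnorm (T x))\<^sup>2)"
    by (simp add: w_def cinner_scaleC_left cinner_self_cnorm)
  ultimately have "Re (cinner (x + scaleC 1 w) (T (x + scaleC 1 w)))
      - Re (cinner (x + scaleC (-1) w) (T (x + scaleC (-1) w))) = 4 * t * (cnorm (T x))\<^sup>2"
    unfolding form by simp
  moreover have "(cnorm (x + scaleC 1 w))\<^sup>2 + (cnorm (x + scaleC (-1) w))\<^sup>2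
      = 2 * (cnorm x)\<^sup>2 + 2 * (cnorm w)\<^sup>2"
    using sq[of 1] sq[of "-1"] by (simp add: cnorm_square)
  moreover have "cnorm w = t * cnorm (T x)" using \<open>t > 0\<close> by (simp add: w_def cnorm_scaleC)
  ultimately show ?thesis
    using bound[of "x + scaleC 1 w"] bound[of "x + scaleC (-1) w"] by (simp add: power_mult_distrib)
qed

lemma form_bounded_contraction:
  assumes T: "linear_op T" and sym: "\<And>x y. cinner (T x) y = cinner x (T y)"
    and bound: "\<And>z. \<bar>Re (cinner z (T z))\<bar> \<le> (cnorm z)\<^sup>2"
  shows "contraction T"
  unfolding contraction_def
proof
  fix x
  show "cnorm (T x) \<le> cnorm x"
  proof (cases "cnorm x = 0 \<or> cnorm (T x) = 0")
    case True
    then show ?thesis by (auto simp: cnorm_eq_0 linear_op_zero[OF T])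
  next
    case False
    then have nx: "cnorm x > 0" and ny: "cnorm (T x) > 0"
      using cnorm_nonneg by (metis less_eq_real_def)+
    have "4 * cnorm x * cnorm (T x) \<le> 4 * (cnorm x)\<^sup>2"
      using form_bounded_polarization[OF T sym bound, of "cnorm x / cnorm (T x)" x] nx ny
      by (simp add: power2_eq_square field_simps)
    then show ?thesis using nx by (simp add: power2_eq_square)
  qed
qed

lemma observable_hermitian_contraction:
  assumes "observable M a" "M \<subseteq> BH"
  shows "hermitian a" "contraction a"
proof -
  have b: "bounded_op a" using assms by (auto simp: observable_def BH_def)
  note lin = bounded_op_linear[OF b]
  have lower: "Im (cinner z (a z + z)) = 0 \<and> 0 \<le> Re (cinner z (a z + z))" for z
    using assms(1) unfolding observable_def op_le_def positive_op_def op_diff_def op_scale_def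
    by simp
  have upper: "Im (cinner z (z - a z)) = 0 \<and> 0 \<le> Re (cinner z (z - a z))" for z
    using assms(1) unfolding observable_def op_le_def positive_op_def op_diff_def by simp
  have "Im (cinner z (a z)) = 0" for z
    using lower[of z] cinner_self_nonneg[of z] by (simp add: cinner_add_right)
  then have sym: "cinner (a x) y = cinner x (a y)" for x y
    by (rule real_form_hermitian[OF lin])
  then show "hermitian a" using b by (simp add: hermitian_def)
  have "\<bar>Re (cinner z (a z))\<bar> \<le> (cnorm z)\<^sup>2" for z
    using lower[of z] upper[of z]
    by (simp add: cinner_add_right cinner_diff_right cnorm_square abs_le_iff)
  then show "contraction a" by (rule form_bounded_contraction[OF lin sym])
qed

definition converges :: "(nat \<Rightarrow> 'a::complex_inner_space) \<Rightarrow> 'a \<Rightarrow> bool" where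
  "converges X L \<longleftrightarrow> (\<lambda>p. cnorm (X p - L)) \<longlonglongrightarrow> 0"

lemma converges_comparison:
  assumes "\<And>p. cnorm (X p - L) \<le> f p" "f \<longlonglongrightarrow> 0" shows "converges X L"
  unfolding converges_def
  by (rule Lim_null_comparison[OF _ assms(2)]) (use assms(1) in auto)

lemma converges_unique:
  assumes "converges X L" "converges X L'" shows "L = L'"
proof -
  have le: "cnorm (L - L') \<le> cnorm (X p - L) + cnorm (X p - L')" for p
    using cnorm_triangle_diff[of L L' "X p"] cnorm_minus_commute[of L "X p"] by simp
  have "(\<lambda>p. cnorm (X p - L) + cnorm (X p - L')) \<longlonglongrightarrow> 0 + 0"
    using assms unfolding converges_def by (intro tendsto_add)
  then have "cnorm (L - L') \<le> 0"
    by (intro LIMSEQ_le[OF tendsto_const]) (use le in auto)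
  then have "cnorm (L - L') = 0" using cnorm_nonneg by (metis order_antisym)
  then show ?thesis by (simp add: cnorm_eq_0)
qed

lemma converges_add:
  assumes "converges X L" "converges Y K" shows "converges (\<lambda>p. X p + Y p) (L + K)"
proof (rule converges_comparison)
  show "cnorm (X p + Y p - (L + K)) \<le> cnorm (X p - L) + cnorm (Y p - K)" for p
    using cnorm_triangle[of "X p - L" "Y p - K"] by (simp add: algebra_simps)
  show "(\<lambda>p. cnorm (X p - L) + cnorm (Y p - K)) \<longlonglongrightarrow> 0"
    using tendsto_add[OF assms[unfolded converges_def]] by simp
qed

lemma converges_bounded_op:
  assumes "converges X L" "bounded_op T"
  shows "converges (\<lambda>p. T (X p)) (T L)"
proof -
  obtain K where K: "K \<ge> 0" "\<forall>x. cnorm (T x) \<le> K * cnorm x"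
    using bounded_op_bound[OF assms(2)] by blast
  show ?thesis
  proof (rule converges_comparison)
    show "cnorm (T (X p) - T L) \<le> K * cnorm (X p - L)" for p
      using K(2) by (simp add: linear_op_diff[OF bounded_op_linear[OF assms(2)], symmetric])
    show "(\<lambda>p. K * cnorm (X p - L)) \<longlonglongrightarrow> 0"
      using tendsto_mult_right_zero[OF assms(1)[unfolded converges_def]] by simp
  qed
qed

lemma converges_scaleC:
  assumes "converges X L" shows "converges (\<lambda>p. scaleC c (X p)) (scaleC c L)"
proof (rule converges_comparison)
  show "cnorm (scaleC c (X p) - scaleC c L) \<le> cmod c * cnorm (X p - L)" for p
    by (simp add: scaleC_diff_right[symmetric] cnorm_scaleC)
  show "(\<lambda>p. cmod c * cnorm (X p - L)) \<longlonglongrightarrow> 0"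
    using tendsto_mult_right_zero[OF assms[unfolded converges_def]] by simp
qed

lemma converges_const: "converges (\<lambda>p. x) x"
  by (simp add: converges_def)

lemma converges_Suc: "converges X L \<Longrightarrow> converges (\<lambda>n. X (Suc n)) L"
  unfolding converges_def by (rule LIMSEQ_Suc[where f="\<lambda>p. cnorm (X p - L)"])

lemma converges_cinner_left:
  assumes "converges X L" shows "(\<lambda>p. cinner (X p) y) \<longlonglongrightarrow> cinner L y"
proof -
  have "(\<lambda>p. cinner (X p) y - cinner L y) \<longlonglongrightarrow> 0"
  proof (rule Lim_null_comparison)
    show "\<forall>\<^sub>F p in sequentially. norm (cinner (X p) y - cinner L y) \<le> cnorm (X p - L) * cnorm y"
      using cinner_cauchy_schwarz[of "X p - L" y for p] by (simp add: cinner_diff_left)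
    show "(\<lambda>p. cnorm (X p - L) * cnorm y) \<longlonglongrightarrow> 0"
      using tendsto_mult_left_zero[OF assms[unfolded converges_def]] by simp
  qed
  then show ?thesis by (simp add: LIM_zero_iff)
qed

lemma converges_cinner_right:
  assumes "converges X L" shows "(\<lambda>p. cinner y (X p)) \<longlonglongrightarrow> cinner y L"
  using tendsto_cnj[OF converges_cinner_left[OF assms, of y]] by (subst (1 2) cinner_commute) simp

lemma converges_cnorm:
  assumes "converges X L" shows "(\<lambda>p. cnorm (X p)) \<longlonglongrightarrow> cnorm L"
proof -
  have "(\<lambda>p. cnorm (X p) - cnorm L) \<longlonglongrightarrow> 0"
  proof (rule Lim_null_comparison)
    show "\<forall>\<^sub>F p in sequentially. norm (cnorm (X p) - cnorm L) \<le> cnorm (X p - L)"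
      by (intro always_eventually allI) (simp add: cnorm_reverse_triangle)
  qed (use assms in \<open>simp add: converges_def\<close>)
  then show ?thesis by (simp add: LIM_zero_iff)
qed

lemma cauchy_converges:
  fixes X :: "nat \<Rightarrow> 'h::complex_hilbert_space"
  assumes "\<And>e. e > 0 \<Longrightarrow> \<exists>N. \<forall>p\<ge>N. \<forall>q\<ge>N. cnorm (X p - X q) < e"
  shows "\<exists>L. converges X L"
proof -
  obtain L where L: "\<forall>e>0. \<exists>N. \<forall>p\<ge>N. cnorm (X p - L) < e"
    using cauchy_complete[of X] assms unfolding cnorm_def by blast
  have "converges X L" unfolding converges_def
  proof (rule LIMSEQ_I)
    fix r :: real assume "r > 0"
    then show "\<exists>N. \<forall>n\<ge>N. norm (cnorm (X n - L) - 0) < r" using L by auto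
  qed
  then show ?thesis by blast
qed

section \<open>Square roots\<close>

text \<open>For a contraction \<open>A\<close>, the iteration \<open>Y\<^sub>n\<^sub>+\<^sub>1 = (A + Y\<^sub>n\<^sup>2) / 2\<close> from \<open>Y\<^sub>0 = 0\<close>
  converges strongly to \<open>1 - \<surd>(1 - A)\<close>; its increments are dominated by those of the scalar
  iteration \<open>r\<^sub>n\<^sub>+\<^sub>1 = (1 + r\<^sub>n\<^sup>2) / 2\<close>, which increases to \<open>1\<close>.\<close>

primrec root_iter :: "('a::complex_inner_space \<Rightarrow> 'a) \<Rightarrow> nat \<Rightarrow> 'a \<Rightarrow> 'a" where
  "root_iter A 0 = (\<lambda>x. 0)"
| "root_iter A (Suc n) = (\<lambda>x. scaleC (1/2) (A x + root_iter A n (root_iter A n x)))"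

primrec root_iter_bound :: "nat \<Rightarrow> real" where
  "root_iter_bound 0 = 0"
| "root_iter_bound (Suc n) = (1 + (root_iter_bound n)\<^sup>2) / 2"

lemma root_iter_bound_range: "0 \<le> root_iter_bound n \<and> root_iter_bound n \<le> 1"
proof (induction n)
  case (Suc n)
  then have "(root_iter_bound n)\<^sup>2 \<le> 1" by (simp add: power_le_one)
  then show ?case by simp
qed simp

lemma incseq_root_iter_bound: "incseq root_iter_bound"
proof (rule incseq_SucI)
  fix n
  have "0 \<le> (1 - root_iter_bound n)\<^sup>2 / 2" by simp
  then show "root_iter_bound n \<le> root_iter_bound (Suc n)"
    by (simp add: power2_eq_square algebra_simps)
qed

lemma Cauchy_root_iter_bound: "Cauchy root_iter_bound"
proof -
  have "bdd_above (range root_iter_bound)"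
    by (rule bdd_aboveI[of _ 1]) (use root_iter_bound_range in auto)
  then have "root_iter_bound \<longlonglongrightarrow> (SUP i. root_iter_bound i)"
    by (rule LIMSEQ_incseq_SUP[OF _ incseq_root_iter_bound])
  then show ?thesis by (rule LIMSEQ_imp_Cauchy)
qed

locale root_iteration =
  fixes A :: "'h::complex_hilbert_space \<Rightarrow> 'h"
  assumes linear: "linear_op A" and contr: "contraction A"
begin

abbreviation "Y \<equiv> root_iter A"
abbreviation "r \<equiv> root_iter_bound"

lemma Y_Suc: "Y (Suc n) x = scaleC (1/2) (A x + Y n (Y n x))"
  by simp

declare root_iter.simps(2) [simp del]

lemma linear_Y: "linear_op (Y n)"
proof (induction n)
  case 0 then show ?case by (simp add: linear_op_def)
next
  case (Suc n)
  have "Y (Suc n) (x + y) = Y (Suc n) x + Y (Suc n) y" for x y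
    by (simp add: Y_Suc linear_op_add[OF linear] linear_op_add[OF Suc] scaleC_add_right[symmetric]
        algebra_simps)
  moreover have "Y (Suc n) (scaleC c x) = scaleC c (Y (Suc n) x)" for c x
    by (simp add: Y_Suc linear_op_scaleC[OF linear] linear_op_scaleC[OF Suc]
        scaleC_add_right[symmetric] scaleC_scaleC mult.commute)
  ultimately show ?case by (simp add: linear_op_def)
qed

lemma cnorm_Y: "cnorm (Y n x) \<le> r n * cnorm x"
proof (induction n arbitrary: x)
  case 0 then show ?case by simp
next
  case (Suc n)
  have "cnorm (Y n (Y n x)) \<le> r n * cnorm (Y n x)" by (rule Suc)
  also have "\<dots> \<le> r n * (r n * cnorm x)"
    by (rule mult_left_mono[OF Suc]) (use root_iter_bound_range in simp)
  finally have "cnorm (A x + Y n (Y n x)) \<le> cnorm x + r n * (r n * cnorm x)"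
    using cnorm_triangle[of "A x" "Y n (Y n x)"] contr[unfolded contraction_def, rule_format, of x]
    by linarith
  then have "cnorm (Y (Suc n) x) \<le> (1/2) * (cnorm x + r n * (r n * cnorm x))"
    by (simp add: Y_Suc cnorm_scaleC)
  also have "\<dots> = r (Suc n) * cnorm x" by (simp add: power2_eq_square algebra_simps)
  finally show ?case .
qed

lemma contraction_Y: "contraction (Y n)"
  unfolding contraction_def
  using cnorm_Y order_trans mult_right_mono[OF conjunct2[OF root_iter_bound_range] cnorm_nonneg]
  by fastforce

lemma cnorm_Y_Suc_diff: "cnorm (Y (Suc n) x - Y n x) \<le> (r (Suc n) - r n) * cnorm x"
proof (induction n arbitrary: x)
  case 0
  then show ?case using contr by (simp add: Y_Suc cnorm_scaleC contraction_def)
next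
  case (Suc n)
  define d where "d = r (Suc n) - r n"
  have d: "d \<ge> 0" using incseq_SucD[OF incseq_root_iter_bound, of n] by (simp add: d_def)
  have r: "0 \<le> r n" "0 \<le> r (Suc n)" using root_iter_bound_range by auto
  have "Y (Suc (Suc n)) x - Y (Suc n) x = scaleC (1/2) (Y (Suc n) (Y (Suc n) x) - Y n (Y n x))"
    by (simp add: Y_Suc scaleC_diff_right[symmetric])
  also have "Y (Suc n) (Y (Suc n) x) - Y n (Y n x)
      = Y (Suc n) (Y (Suc n) x - Y n x) + (Y (Suc n) (Y n x) - Y n (Y n x))"
    by (simp add: linear_op_diff[OF linear_Y])
  finally have eq: "Y (Suc (Suc n)) x - Y (Suc n) x
      = scaleC (1/2) (Y (Suc n) (Y (Suc n) x - Y n x) + (Y (Suc n) (Y n x) - Y n (Y n x)))" .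
  have "cnorm (Y (Suc n) (Y (Suc n) x - Y n x)) \<le> r (Suc n) * (d * cnorm x)"
    using cnorm_Y[of "Suc n" "Y (Suc n) x - Y n x"] mult_left_mono[OF Suc[of x] r(2)]
    by (simp add: d_def)
  moreover have "cnorm (Y (Suc n) (Y n x) - Y n (Y n x)) \<le> d * cnorm (Y n x)"
    unfolding d_def by (rule Suc)
  moreover have "d * cnorm (Y n x) \<le> d * (r n * cnorm x)"
    by (rule mult_left_mono[OF cnorm_Y d])
  ultimately have "cnorm (Y (Suc n) (Y (Suc n) x - Y n x) + (Y (Suc n) (Y n x) - Y n (Y n x)))
      \<le> r (Suc n) * (d * cnorm x) + d * (r n * cnorm x)"
    using cnorm_triangle[of "Y (Suc n) (Y (Suc n) x - Y n x)" "Y (Suc n) (Y n x) - Y n (Y n x)"]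
    by linarith
  then have "cnorm (Y (Suc (Suc n)) x - Y (Suc n) x)
      \<le> (1/2) * (r (Suc n) * (d * cnorm x) + d * (r n * cnorm x))"
    unfolding eq cnorm_scaleC by simp
  also have "\<dots> = (r (Suc (Suc n)) - r (Suc n)) * cnorm x"
    by (simp add: d_def power2_eq_square algebra_simps)
  finally show ?case .
qed

lemma cnorm_Y_diff: "p \<le> q \<Longrightarrow> cnorm (Y q x - Y p x) \<le> (r q - r p) * cnorm x"
proof (induction q rule: dec_induct)
  case base then show ?case by simp
next
  case (step q)
  have "cnorm (Y (Suc q) x - Y p x) \<le> cnorm (Y (Suc q) x - Y q x) + cnorm (Y q x - Y p x)"
    by (rule cnorm_triangle_diff)
  also have "\<dots> \<le> (r (Suc q) - r q) * cnorm x + (r q - r p) * cnorm x"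
    using cnorm_Y_Suc_diff[of q x] step.IH by simp
  finally show ?case by (simp add: algebra_simps)
qed

lemma Y_converges: "\<exists>L. converges (\<lambda>n. Y n x) L"
proof (rule cauchy_converges)
  fix e :: real assume "e > 0"
  then have e': "e / (cnorm x + 1) > 0" by (simp add: add_nonneg_pos)
  obtain N where N: "\<forall>p\<ge>N. \<forall>q\<ge>N. \<bar>r p - r q\<bar> < e / (cnorm x + 1)"
    using CauchyD[OF Cauchy_root_iter_bound e'] by auto
  have "cnorm (Y p x - Y q x) < e" if "p \<ge> N" "q \<ge> N" for p q
  proof -
    have "cnorm (Y p x - Y q x) \<le> \<bar>r p - r q\<bar> * cnorm x"
      using cnorm_Y_diff[of q p x] cnorm_Y_diff[of p q x] cnorm_minus_commute[of "Y p x" "Y q x"]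
        incseqD[OF incseq_root_iter_bound, of p q] incseqD[OF incseq_root_iter_bound, of q p]
      by (cases "q \<le> p") auto
    also have "\<dots> \<le> e / (cnorm x + 1) * cnorm x"
      using N that by (intro mult_right_mono) (auto simp: less_imp_le)
    also have "\<dots> = e * (cnorm x / (cnorm x + 1))" by simp
    also have "\<dots> < e * 1"
      using \<open>e > 0\<close> by (intro mult_strict_left_mono) (simp_all add: add_nonneg_pos)
    finally show ?thesis by simp
  qed
  then show "\<exists>N. \<forall>p\<ge>N. \<forall>q\<ge>N. cnorm (Y p x - Y q x) < e" by blast
qed

definition Ylim :: "'h \<Rightarrow> 'h" where
  "Ylim x = (SOME L. converges (\<lambda>n. Y n x) L)"

lemma Ylim: "converges (\<lambda>n. Y n x) (Ylim x)"
  unfolding Ylim_def by (rule someI_ex[OF Y_converges])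

lemma linear_Ylim: "linear_op Ylim"
proof -
  have "Ylim (x + y) = Ylim x + Ylim y" for x y
    using converges_add[OF Ylim[of x] Ylim[of y]]
    by (intro converges_unique[OF Ylim]) (simp add: linear_op_add[OF linear_Y])
  moreover have "Ylim (scaleC c x) = scaleC c (Ylim x)" for c x
    using converges_scaleC[OF Ylim[of x]]
    by (intro converges_unique[OF Ylim]) (simp add: linear_op_scaleC[OF linear_Y])
  ultimately show ?thesis by (simp add: linear_op_def)
qed

lemma contraction_Ylim: "contraction Ylim"
  unfolding contraction_def
  by (rule allI, rule LIMSEQ_le_const2[OF converges_cnorm[OF Ylim]])
    (use contraction_Y in \<open>auto simp: contraction_def\<close>)

lemma Ylim_fixpoint: "Ylim x = scaleC (1/2) (A x + Ylim (Ylim x))"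
proof (rule converges_unique)
  show "converges (\<lambda>n. Y (Suc n) x) (Ylim x)" by (rule converges_Suc[OF Ylim])
  have "converges (\<lambda>n. Y n (Y n x)) (Ylim (Ylim x))"
  proof (rule converges_comparison)
    show "cnorm (Y n (Y n x) - Ylim (Ylim x))
        \<le> cnorm (Y n x - Ylim x) + cnorm (Y n (Ylim x) - Ylim (Ylim x))" for n
    proof -
      have "Y n (Y n x) - Ylim (Ylim x) = Y n (Y n x - Ylim x) + (Y n (Ylim x) - Ylim (Ylim x))"
        by (simp add: linear_op_diff[OF linear_Y])
      then have "cnorm (Y n (Y n x) - Ylim (Ylim x))
          \<le> cnorm (Y n (Y n x - Ylim x)) + cnorm (Y n (Ylim x) - Ylim (Ylim x))"
        by (simp only: cnorm_triangle)
      then show ?thesis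
        using contraction_Y[of n, unfolded contraction_def, rule_format, of "Y n x - Ylim x"]
        by linarith
    qed
    show "(\<lambda>n. cnorm (Y n x - Ylim x) + cnorm (Y n (Ylim x) - Ylim (Ylim x))) \<longlonglongrightarrow> 0"
      using tendsto_add[OF Ylim[of x, unfolded converges_def]
          Ylim[of "Ylim x", unfolded converges_def]]
      by simp
  qed
  then show "converges (\<lambda>n. Y (Suc n) x) (scaleC (1/2) (A x + Ylim (Ylim x)))"
    using converges_scaleC[OF converges_add[OF converges_const], of _ _ "1/2" "A x"]
    by (simp add: Y_Suc)
qed

lemma Ylim_symmetric:
  assumes sym: "\<And>x y. cinner (A x) y = cinner x (A y)"
  shows "cinner (Ylim x) y = cinner x (Ylim y)"
proof -
  have Y_sym: "cinner (Y n x) y = cinner x (Y n y)" for n x y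
    by (induction n arbitrary: x y)
      (simp_all add: Y_Suc cinner_scaleC_left cinner_scaleC_right cinner_add_left
        cinner_add_right sym)
  have "(\<lambda>n. cinner (Y n x) y) \<longlonglongrightarrow> cinner (Ylim x) y"
    by (rule converges_cinner_left[OF Ylim])
  moreover have "(\<lambda>n. cinner (Y n x) y) \<longlonglongrightarrow> cinner x (Ylim y)"
    using converges_cinner_right[OF Ylim, of x y] by (simp add: Y_sym)
  ultimately show ?thesis by (rule LIMSEQ_unique)
qed

lemma Ylim_commute:
  assumes C: "bounded_op C" and CA: "\<And>x. C (A x) = A (C x)"
  shows "C (Ylim x) = Ylim (C x)"
proof -
  note lin = bounded_op_linear[OF C]
  have Y_comm: "C (Y n x) = Y n (C x)" for n x
    by (induction n arbitrary: x)
      (simp_all add: Y_Suc linear_op_scaleC[OF lin] linear_op_add[OF lin] linear_op_zero[OF lin] CA)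
  have "converges (\<lambda>n. C (Y n x)) (C (Ylim x))"
    by (rule converges_bounded_op[OF Ylim C])
  moreover have "converges (\<lambda>n. C (Y n x)) (Ylim (C x))"
    using Ylim[of "C x"] by (simp add: Y_comm)
  ultimately show ?thesis by (rule converges_unique)
qed


lemma bounded_op_id_minus_Ylim: "bounded_op (\<lambda>x. x - Ylim x)"
proof (rule bounded_opI)
  show "linear_op (\<lambda>x. x - Ylim x)"
    using linear_Ylim by (simp add: linear_op_def scaleC_diff_right algebra_simps)
  show "cnorm (x - Ylim x) \<le> 2 * cnorm x" for x
    using cnorm_diff_le[of x "Ylim x"] contraction_Ylim[unfolded contraction_def, rule_format, of x]
    by simp
qed

lemma id_minus_Ylim_square: "(x - Ylim x) - Ylim (x - Ylim x) = x - A x"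
proof -
  have "Ylim x + Ylim x = A x + Ylim (Ylim x)"
    using scaleC_half_double[of "A x + Ylim (Ylim x)"] Ylim_fixpoint[of x, symmetric] by simp
  then show ?thesis by (simp add: linear_op_diff[OF linear_Ylim] algebra_simps)
qed

end

lemma sqrt_exists:
  assumes T: "hermitian T" and contr: "contraction (op_diff id T)"
  shows "\<exists>S. hermitian S \<and> S \<circ> S = T \<and> S \<in> commutant (commutant {T})"
proof -
  define A where "A = op_diff id T"
  have "hermitian A" unfolding A_def by (rule hermitian_diff[OF hermitian_id T])
  then have symA: "cinner (A x) y = cinner x (A y)" for x y by (simp add: hermitian_def)
  interpret root_iteration A
    using hermitian_linear_op[OF \<open>hermitian A\<close>] contr by unfold_locales (simp_all add: A_def)
  define S where "S x = x - Ylim x" for x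
  have bS: "bounded_op S" unfolding S_def by (rule bounded_op_id_minus_Ylim)
  have "cinner (S x) y = cinner x (S y)" for x y
    using Ylim_symmetric[OF symA] by (simp add: S_def cinner_diff_left cinner_diff_right)
  then have "hermitian S" using bS by (simp add: hermitian_def)
  moreover have "S \<circ> S = T"
    using id_minus_Ylim_square by (simp add: fun_eq_iff S_def A_def op_diff_def)
  moreover have "S \<circ> C = C \<circ> S" if "C \<in> commutant {T}" for C
  proof -
    have C: "bounded_op C" "C \<circ> T = T \<circ> C" using that by (auto simp: commutant_def BH_def)
    note lin = bounded_op_linear[OF C(1)]
    have "C (T x) = T (C x)" for x using C(2) by (metis comp_apply)
    then have "C (A x) = A (C x)" for x
      by (simp add: A_def op_diff_def linear_op_diff[OF lin])
    then show ?thesis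
      by (simp add: fun_eq_iff S_def linear_op_diff[OF lin] Ylim_commute[OF C(1)])
  qed
  then have "S \<in> commutant (commutant {T})" using bS by (auto simp: commutant_def BH_def)
  ultimately show ?thesis by blast
qed

definition op_sqrt :: "('h::complex_hilbert_space \<Rightarrow> 'h) \<Rightarrow> ('h \<Rightarrow> 'h)" where
  "op_sqrt T = (SOME S. hermitian S \<and> S \<circ> S = T \<and> S \<in> commutant (commutant {T}))"

lemma op_sqrt:
  assumes "hermitian T" "contraction (op_diff id T)"
  shows "hermitian (op_sqrt T)" "op_sqrt T \<circ> op_sqrt T = T"
    "op_sqrt T \<in> commutant (commutant {T})"
  using someI_ex[OF sqrt_exists[OF assms]] unfolding op_sqrt_def by blast+

section \<open>Differences of squares\<close>

definition square_decomp ::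
    "('h::complex_hilbert_space \<Rightarrow> 'h) set \<Rightarrow> ('h \<Rightarrow> 'h) \<Rightarrow> ('h \<Rightarrow> 'h) \<Rightarrow> ('h \<Rightarrow> 'h) \<Rightarrow> ('h \<Rightarrow> 'h) \<Rightarrow> bool"
  where "square_decomp B f g P N \<longleftrightarrow> P \<in> B \<and> N \<in> B \<and> hermitian P \<and> hermitian N \<and> P \<circ> N = N \<circ> P \<and>
     op_diff (P \<circ> P) (N \<circ> N) = f \<and> op_add (P \<circ> P) (N \<circ> N) = g"

lemma square_decomp_mono: "square_decomp B f g P N \<Longrightarrow> B \<subseteq> M \<Longrightarrow> square_decomp M f g P N"
  by (auto simp: square_decomp_def)

lemma op_sqrt_id_add_bicommutant:
  assumes "c \<in> commutant (commutant X)" "hermitian c" "contraction c"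
  shows "op_sqrt (op_add id c) \<in> commutant (commutant X)" "hermitian (op_sqrt (op_add id c))"
    "op_sqrt (op_add id c) (op_sqrt (op_add id c) y) = y + c y"
proof -
  have "contraction (op_diff id (op_add id c))"
    using assms(3) by (simp add: contraction_def op_diff_def op_add_def)
  note root = op_sqrt[OF hermitian_add[OF hermitian_id assms(2)] this]
  have alg: "op_algebra (commutant (commutant X))"
    by (rule op_algebra_commutant[OF commutant_bounded])
  have "op_add id c \<in> commutant (commutant X)"
    by (rule op_algebra_add[OF alg op_algebra_id[OF alg] assms(1)])
  then show "op_sqrt (op_add id c) \<in> commutant (commutant X)"
    using root(3) bicommutant_least[of "{op_add id c}" X] by auto
  show "hermitian (op_sqrt (op_add id c))" by (rule root(1))
  show "op_sqrt (op_add id c) (op_sqrt (op_add id c) y) = y + c y"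
    using fun_cong[OF root(2), of y] by (simp add: op_add_def)
qed

lemma scaled_product_square:
  assumes "linear_op S" "linear_op T" "S \<circ> T = T \<circ> S"
  shows "(op_scale r (S \<circ> T) \<circ> op_scale r (S \<circ> T)) y = scaleC (r * r) (S (S (T (T y))))"
proof -
  have "T (S z) = S (T z)" for z using assms(3) by (metis comp_apply)
  then show ?thesis using assms(1,2) by (simp add: op_scale_def linear_op_scaleC scaleC_scaleC)
qed

lemma half_expansions:
  assumes "linear_op a"
  shows "scaleC (1/2) (y + z + a (y + z)) - scaleC (1/2) (y - z - a (y - z)) = a y + z"
    and "scaleC (1/2) (y + z + a (y + z)) + scaleC (1/2) (y - z - a (y - z)) = y + a z"
proof -
  have half: "scaleC (1/2) (u + u) = u" for u :: 'a
    using scaleC_half_double[of u] by (simp add: scaleC_add_right)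
  have "(y + z + a (y + z)) - (y - z - a (y - z)) = (a y + z) + (a y + z)"
    "(y + z + a (y + z)) + (y - z - a (y - z)) = (y + a z) + (y + a z)"
    by (simp_all add: linear_op_add[OF assms] linear_op_diff[OF assms] algebra_simps)
  then show "scaleC (1/2) (y + z + a (y + z)) - scaleC (1/2) (y - z - a (y - z)) = a y + z"
    and "scaleC (1/2) (y + z + a (y + z)) + scaleC (1/2) (y - z - a (y - z)) = y + a z"
    by (simp_all only: half flip: scaleC_diff_right scaleC_add_right)
qed

text \<open>With \<open>P = \<surd>((1 + a)(1 + b) / 2)\<close> and \<open>N = \<surd>((1 - a)(1 - b) / 2)\<close>, built from commuting
  square roots, \<open>P\<^sup>2 - N\<^sup>2 = a + b\<close> and \<open>P\<^sup>2 + N\<^sup>2 = 1 + a b\<close>.\<close>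
lemma commuting_square_decomp:
  fixes a b :: "'h::complex_hilbert_space \<Rightarrow> 'h"
  assumes a: "hermitian a" "contraction a" and b: "hermitian b" "contraction b"
    and ab: "a \<circ> b = b \<circ> a"
  shows "\<exists>P N. square_decomp (commutant (commutant {a, b})) (op_add a b) (op_add id (a \<circ> b)) P N"
proof -
  define B where "B = commutant (commutant {a, b})"
  have bounded: "{a, b} \<subseteq> BH" using a b by (simp add: BH_def hermitian_def)
  have alg: "op_algebra B" unfolding B_def by (rule op_algebra_commutant[OF commutant_bounded])
  have abel: "abelian B"
    unfolding B_def by (rule abelian_bicommutant[OF bounded]) (use ab in \<open>auto simp: abelian_def\<close>)
  have aB: "a \<in> B" and bB: "b \<in> B" using subset_bicommutant[OF bounded] by (auto simp: B_def)
  have neg: "op_scale (-1) c \<in> B" "hermitian (op_scale (-1) c)" "contraction (op_scale (-1) c)"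
    if "c \<in> B" "hermitian c" "contraction c" for c
    using that op_algebra_scale[OF alg] hermitian_scale_real[of c "-1"] contraction_scale_minus_one
    by auto
  define r where "r = complex_of_real (sqrt (1/2))"
  define U where "U = op_sqrt (op_add id a)"
  define V where "V = op_sqrt (op_add id (op_scale (-1) a))"
  define X where "X = op_sqrt (op_add id b)"
  define Z where "Z = op_sqrt (op_add id (op_scale (-1) b))"
  define P where "P = op_scale r (U \<circ> X)"
  define N where "N = op_scale r (V \<circ> Z)"
  note root = op_sqrt_id_add_bicommutant[where X="{a, b}", folded B_def]
  note U = root[OF aB a, folded U_def] and X = root[OF bB b, folded X_def]
  note V = root[OF neg[OF aB a], folded V_def] and Z = root[OF neg[OF bB b], folded Z_def]
  have UX: "U \<circ> X = X \<circ> U" "V \<circ> Z = Z \<circ> V" using abel U(1) V(1) X(1) Z(1)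
    by (auto simp: abelian_def)
  have rr: "r * r = 1/2" by (simp add: r_def flip: of_real_mult)
  have "P (P y) = scaleC (1/2) (y + b y + a (y + b y))"
    "N (N y) = scaleC (1/2) (y - b y - a (y - b y))" for y
    using scaled_product_square[OF hermitian_linear_op[OF U(2)] hermitian_linear_op[OF X(2)] UX(1),
        of r y, unfolded rr]
      scaled_product_square[OF hermitian_linear_op[OF V(2)] hermitian_linear_op[OF Z(2)] UX(2),
        of r y, unfolded rr]
      U(3) X(3) V(3) Z(3)
    by (simp_all add: P_def N_def op_scale_def)
  then have "op_diff (P \<circ> P) (N \<circ> N) = op_add a b" "op_add (P \<circ> P) (N \<circ> N) = op_add id (a \<circ> b)"
    using half_expansions[OF hermitian_linear_op[OF a(1)]]
    by (simp_all add: fun_eq_iff op_diff_def op_add_def)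
  moreover have "P \<in> B" "N \<in> B"
    unfolding P_def N_def using U(1) V(1) X(1) Z(1) alg
    by (simp_all add: op_algebra_comp op_algebra_scale)
  moreover have "hermitian P" "hermitian N"
    unfolding P_def N_def r_def using U(2) V(2) X(2) Z(2) UX
    by (simp_all add: hermitian_comp hermitian_scale_real)
  moreover have "P \<circ> N = N \<circ> P" using abel calculation(3,4) by (simp add: abelian_def)
  ultimately show ?thesis unfolding square_decomp_def B_def by blast
qed

lemma von_neumann_algebra_square_decomp:
  assumes M: "von_neumann_algebra M" and "a \<in> M" "b \<in> M"
    and "hermitian a" "contraction a" "hermitian b" "contraction b" "a \<circ> b = b \<circ> a"
  shows "\<exists>P N. square_decomp M (op_add a b) (op_add id (a \<circ> b)) P N"
  using commuting_square_decomp[OF assms(4-8)] square_decomp_mono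
    von_neumann_algebra_bicommutant_subset[OF M, of "{a, b}"] assms(2,3) by blast

lemma observable_square_decomp:
  assumes M: "von_neumann_algebra M" and a: "observable M a"
  shows "\<exists>P N. square_decomp M a id P N"
proof -
  have "hermitian a" "contraction a" "a \<in> M"
    using observable_hermitian_contraction[OF a von_neumann_algebra_bounded[OF M]] a
    by (auto simp: observable_def)
  moreover have "(\<lambda>x. 0) \<in> M"
    using op_algebra_scale[OF von_neumann_algebra_op_algebra[OF M] op_algebra_id, of 0]
      von_neumann_algebra_op_algebra[OF M] by (simp add: op_scale_def)
  moreover have "op_add a (\<lambda>x. 0) = a" "op_add id (a \<circ> (\<lambda>x. 0)) = id" "a \<circ> (\<lambda>x. 0) = (\<lambda>x. 0) \<circ> a"
    using linear_op_zero[OF hermitian_linear_op[OF \<open>hermitian a\<close>]] by (auto simp: op_add_def)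
  ultimately show ?thesis
    using von_neumann_algebra_square_decomp[OF M, of a "\<lambda>x. 0"] hermitian_zero contraction_zero
    by metis
qed

lemma commuting_observables_square_decomp:
  assumes M: "von_neumann_algebra M" and a: "observable M a" and b: "observable M b"
    and ab: "a \<circ> b = b \<circ> a"
  shows "\<exists>P N. square_decomp M (op_add a b) (op_add id (a \<circ> b)) P N"
    and "\<exists>P N. square_decomp M (op_diff a b) (op_diff id (a \<circ> b)) P N"
proof -
  note bounded = von_neumann_algebra_bounded[OF M]
  have a': "hermitian a" "contraction a" "a \<in> M"
    using observable_hermitian_contraction[OF a bounded] a by (auto simp: observable_def)
  have b': "hermitian b" "contraction b" "b \<in> M"
    using observable_hermitian_contraction[OF b bounded] b by (auto simp: observable_def)
  show "\<exists>P N. square_decomp M (op_add a b) (op_add id (a \<circ> b)) P N"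
    using von_neumann_algebra_square_decomp[OF M] a' b' ab by blast
  note lin = hermitian_linear_op[OF a'(1)]
  have "a (- y) = - a y" for y by (rule linear_op_minus[OF lin])
  then have "a \<circ> op_scale (-1) b = op_scale (-1) b \<circ> a" "op_add a (op_scale (-1) b) = op_diff a b"
    "op_add id (a \<circ> op_scale (-1) b) = op_diff id (a \<circ> b)"
    using ab by (auto simp: op_scale_def op_add_def op_diff_def fun_eq_iff)
  moreover have "op_scale (-1) b \<in> M" "hermitian (op_scale (-1) b)" "contraction (op_scale (-1) b)"
    using op_algebra_scale[OF von_neumann_algebra_op_algebra[OF M] b'(3)]
      hermitian_scale_real[OF b'(1), of "-1"]
      contraction_scale_minus_one[OF b'(2)] by auto
  ultimately show "\<exists>P N. square_decomp M (op_diff a b) (op_diff id (a \<circ> b)) P N"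
    using von_neumann_algebra_square_decomp[OF M a'(3), of "op_scale (-1) b"] a' by metis
qed

lemma state_add: "is_state A \<tau> \<Longrightarrow> S \<in> A \<Longrightarrow> T \<in> A \<Longrightarrow> \<tau> (op_add S T) = \<tau> S + \<tau> T"
  by (simp add: is_state_def)

lemma state_diff:
  assumes "is_state A \<tau>" "op_algebra A" "S \<in> A" "T \<in> A"
  shows "\<tau> (op_diff S T) = \<tau> S - \<tau> T"
proof -
  have "op_scale (-1) T \<in> A" by (rule op_algebra_scale[OF assms(2,4)])
  then show ?thesis
    using assms unfolding op_diff_eq_add_scale is_state_def by simp
qed

lemma state_square_nonneg:
  assumes "is_state A \<tau>" "W \<in> A" "hermitian W"
  shows "Im (\<tau> (W \<circ> W)) = 0 \<and> 0 \<le> Re (\<tau> (W \<circ> W))"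
  using assms hermitian_adj[OF assms(3)] unfolding is_state_def by metis

lemma state_square_decomp_nonneg:
  assumes "is_state A \<tau>" "op_algebra A" "B \<subseteq> A" "square_decomp B f g P N"
  shows "Im (\<tau> g) = 0 \<and> 0 \<le> Re (\<tau> g)"
proof -
  have "P \<in> A" "N \<in> A" "hermitian P" "hermitian N" "g = op_add (P \<circ> P) (N \<circ> N)"
    using assms(3,4) by (auto simp: square_decomp_def)
  then show ?thesis
    using state_add[OF assms(1)] op_algebra_comp[OF assms(2)] state_square_nonneg[OF assms(1)]
    by auto
qed

definition commuting_hermitian :: "('h::complex_hilbert_space \<Rightarrow> 'h) set \<Rightarrow> ('h \<Rightarrow> 'h) set \<Rightarrow> bool"
  where "commuting_hermitian A F \<longleftrightarrow> F \<subseteq> A \<and> (\<forall>T\<in>F. hermitian T) \<and> abelian F"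

lemma commuting_hermitian_commutant:
  assumes "commuting_hermitian A F"
  shows "F \<subseteq> commutant F" "op_algebra (commutant F)"
proof -
  have "F \<subseteq> BH" using assms by (auto simp: commuting_hermitian_def BH_def hermitian_def)
  then show "F \<subseteq> commutant F" "op_algebra (commutant F)"
    using assms abelian_subset_commutant op_algebra_commutant
    by (auto simp: commuting_hermitian_def)
qed

lemma commuting_hermitian_insert_comp:
  assumes "op_algebra A" "commuting_hermitian A F" "W \<in> F" "V \<in> F"
  shows "commuting_hermitian A (insert (W \<circ> V) F)"
proof -
  note F = commuting_hermitian_commutant[OF assms(2)]
  have "W \<circ> V \<in> A" using assms op_algebra_comp[OF assms(1)] by (auto simp: commuting_hermitian_def)
  moreover have "W \<circ> V \<in> commutant F" using assms(3,4) F op_algebra_comp[OF F(2)] by auto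
  moreover have "W \<circ> V = V \<circ> W" using assms(2-4) by (auto simp: commuting_hermitian_def abelian_def)
  moreover have "hermitian (W \<circ> V)"
    using assms(2-4) \<open>W \<circ> V = V \<circ> W\<close> by (intro hermitian_comp) (auto simp: commuting_hermitian_def)
  ultimately show ?thesis
    using assms(2) abelian_insert by (auto simp: commuting_hermitian_def)
qed

lemma op_algebra_foldr_squares:
  assumes "op_algebra X" "P ` set L \<subseteq> X" "N ` set L \<subseteq> X"
    and "\<forall>i\<in>set L. f i = op_diff (P i \<circ> P i) (N i \<circ> N i) \<and> g i = op_add (P i \<circ> P i) (N i \<circ> N i)"
  shows "foldr (\<circ>) (map f L) id \<in> X" "foldr (\<circ>) (map g L) id \<in> X"
proof -
  have "P i \<circ> P i \<in> X" "N i \<circ> N i \<in> X" if "i \<in> set L" for i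
    using that assms(1-3) by (auto intro: op_algebra_comp)
  then have "\<forall>i\<in>set L. f i \<in> X" "\<forall>i\<in>set L. g i \<in> X"
    using assms(4) op_algebra_diff[OF assms(1)] op_algebra_add[OF assms(1)] by metis+
  then show "foldr (\<circ>) (map f L) id \<in> X" "foldr (\<circ>) (map g L) id \<in> X"
    by (simp_all add: op_algebra_foldr[OF assms(1)])
qed

lemma sandwich_squares:
  assumes "linear_op W" "W \<circ> P = P \<circ> W" "W \<circ> N = N \<circ> W" "D \<circ> P = P \<circ> D" "D \<circ> N = N \<circ> D"
  shows "W \<circ> (op_diff (P \<circ> P) (N \<circ> N) \<circ> D) \<circ> W
      = op_diff ((W \<circ> P) \<circ> D \<circ> (W \<circ> P)) ((W \<circ> N) \<circ> D \<circ> (W \<circ> N))"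
    and "W \<circ> (op_add (P \<circ> P) (N \<circ> N) \<circ> D) \<circ> W
      = op_add ((W \<circ> P) \<circ> D \<circ> (W \<circ> P)) ((W \<circ> N) \<circ> D \<circ> (W \<circ> N))"
proof -
  have "W (P x) = P (W x)" "W (N x) = N (W x)" "D (P x) = P (D x)" "D (N x) = N (D x)" for x
    using assms(2-5) by (metis comp_apply)+
  then show "W \<circ> (op_diff (P \<circ> P) (N \<circ> N) \<circ> D) \<circ> W
      = op_diff ((W \<circ> P) \<circ> D \<circ> (W \<circ> P)) ((W \<circ> N) \<circ> D \<circ> (W \<circ> N))"
    and "W \<circ> (op_add (P \<circ> P) (N \<circ> N) \<circ> D) \<circ> W
      = op_add ((W \<circ> P) \<circ> D \<circ> (W \<circ> P)) ((W \<circ> N) \<circ> D \<circ> (W \<circ> N))"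
    by (simp_all add: fun_eq_iff op_diff_def op_add_def linear_op_diff[OF assms(1)]
        linear_op_add[OF assms(1)])
qed

lemma state_sandwich_squares:
  assumes st: "is_state A \<tau>" and alg: "op_algebra A" and F: "commuting_hermitian A F"
    and "W \<in> F" "P \<in> F" "N \<in> F" "D \<in> A" "D \<in> commutant F"
  shows "\<tau> (W \<circ> (op_diff (P \<circ> P) (N \<circ> N) \<circ> D) \<circ> W)
      = \<tau> ((W \<circ> P) \<circ> D \<circ> (W \<circ> P)) - \<tau> ((W \<circ> N) \<circ> D \<circ> (W \<circ> N))"
    and "\<tau> (W \<circ> (op_add (P \<circ> P) (N \<circ> N) \<circ> D) \<circ> W)
      = \<tau> ((W \<circ> P) \<circ> D \<circ> (W \<circ> P)) + \<tau> ((W \<circ> N) \<circ> D \<circ> (W \<circ> N))"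
proof -
  have "W \<in> A" "P \<in> A" "N \<in> A" "hermitian W"
    using F assms(4-6) by (auto simp: commuting_hermitian_def)
  then have mem: "(W \<circ> P) \<circ> D \<circ> (W \<circ> P) \<in> A" "(W \<circ> N) \<circ> D \<circ> (W \<circ> N) \<in> A"
    using assms(7) op_algebra_comp[OF alg] by auto
  have comm: "W \<circ> P = P \<circ> W" "W \<circ> N = N \<circ> W" "D \<circ> P = P \<circ> D" "D \<circ> N = N \<circ> D"
    using F assms(4-6) commutantD[OF assms(8)] by (auto simp: commuting_hermitian_def abelian_def)
  note sandwich = sandwich_squares[OF hermitian_linear_op[OF \<open>hermitian W\<close>] comm]
  show "\<tau> (W \<circ> (op_diff (P \<circ> P) (N \<circ> N) \<circ> D) \<circ> W)
      = \<tau> ((W \<circ> P) \<circ> D \<circ> (W \<circ> P)) - \<tau> ((W \<circ> N) \<circ> D \<circ> (W \<circ> N))"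
    unfolding sandwich(1) by (rule state_diff[OF st alg mem])
  show "\<tau> (W \<circ> (op_add (P \<circ> P) (N \<circ> N) \<circ> D) \<circ> W)
      = \<tau> ((W \<circ> P) \<circ> D \<circ> (W \<circ> P)) + \<tau> ((W \<circ> N) \<circ> D \<circ> (W \<circ> N))"
    unfolding sandwich(2) by (rule state_add[OF st mem])
qed

lemma cmod_diff_le_Re_add:
  fixes u v w z :: complex
  assumes "cmod u \<le> Re w \<and> Im w = 0" "cmod v \<le> Re z \<and> Im z = 0"
  shows "cmod (u - v) \<le> Re (w + z) \<and> Im (w + z) = 0"
  using assms norm_triangle_ineq4[of u v] by simp

text \<open>The induction absorbs one factor at a time into the sandwiching operator,
  \<open>W (P\<^sup>2 - N\<^sup>2) D W = (W P) D (W P) - (W N) D (W N)\<close>, and ends with \<open>\<tau>(W\<^sup>2) \<ge> 0\<close>.\<close>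
lemma state_sandwich_diff_squares_bound:
  assumes st: "is_state A \<tau>" and alg: "op_algebra A"
    and "commuting_hermitian A F" "W \<in> F" "P ` set L \<subseteq> F" "N ` set L \<subseteq> F"
    and "\<forall>i\<in>set L. f i = op_diff (P i \<circ> P i) (N i \<circ> N i) \<and> g i = op_add (P i \<circ> P i) (N i \<circ> N i)"
  shows "cmod (\<tau> (W \<circ> foldr (\<circ>) (map f L) id \<circ> W)) \<le> Re (\<tau> (W \<circ> foldr (\<circ>) (map g L) id \<circ> W))
    \<and> Im (\<tau> (W \<circ> foldr (\<circ>) (map g L) id \<circ> W)) = 0"
  using assms(3-)
proof (induction L arbitrary: W F)
  case Nil
  have "W \<circ> foldr (\<circ>) (map f []) id \<circ> W = W \<circ> W" "W \<circ> foldr (\<circ>) (map g []) id \<circ> W = W \<circ> W"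
    by simp_all
  moreover have "Im (\<tau> (W \<circ> W)) = 0 \<and> 0 \<le> Re (\<tau> (W \<circ> W))"
    using Nil by (intro state_square_nonneg[OF st]) (auto simp: commuting_hermitian_def)
  moreover have "cmod (\<tau> (W \<circ> W)) \<le> Re (\<tau> (W \<circ> W))"
    using calculation(3) cmod_eq_Re[of "\<tau> (W \<circ> W)"] by (metis abs_of_nonneg order_refl)
  ultimately show ?case by (simp only:)
next
  case (Cons i L)
  define D where "D = foldr (\<circ>) (map f L) id"
  define E where "E = foldr (\<circ>) (map g L) id"
  note F = commuting_hermitian_commutant[OF Cons.prems(1)]
  have PN: "P i \<in> F" "N i \<in> F" "P ` set L \<subseteq> F" "N ` set L \<subseteq> F" using Cons.prems(3,4) by auto
  have fg: "\<forall>j\<in>set L. f j = op_diff (P j \<circ> P j) (N j \<circ> N j) \<and> g j = op_add (P j \<circ> P j) (N j \<circ> N j)"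
    using Cons.prems(5) by (meson list.set_intros(2))
  have FA: "F \<subseteq> A" using Cons.prems(1) by (simp add: commuting_hermitian_def)
  have DE: "D \<in> A" "E \<in> A" "D \<in> commutant F" "E \<in> commutant F"
    unfolding D_def E_def using PN(3,4) FA F(1)
    by (auto intro!: op_algebra_foldr_squares[OF alg _ _ fg]
        op_algebra_foldr_squares[OF F(2) _ _ fg])
  have IH: "cmod (\<tau> ((W \<circ> V) \<circ> D \<circ> (W \<circ> V))) \<le> Re (\<tau> ((W \<circ> V) \<circ> E \<circ> (W \<circ> V)))
      \<and> Im (\<tau> ((W \<circ> V) \<circ> E \<circ> (W \<circ> V))) = 0" if "V \<in> F" for V
    unfolding D_def E_def using PN(3,4) fg
    by (intro Cons.IH[OF commuting_hermitian_insert_comp[OF alg Cons.prems(1,2) that]])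
      (auto simp: comp_def)
  have "f i = op_diff (P i \<circ> P i) (N i \<circ> N i)" "g i = op_add (P i \<circ> P i) (N i \<circ> N i)"
    using Cons.prems(5) by (simp_all add: comp_def)
  then have "\<tau> (W \<circ> (f i \<circ> D) \<circ> W) = \<tau> ((W \<circ> P i) \<circ> D \<circ> (W \<circ> P i)) - \<tau> ((W \<circ> N i) \<circ> D \<circ> (W \<circ> N i))"
    "\<tau> (W \<circ> (g i \<circ> E) \<circ> W) = \<tau> ((W \<circ> P i) \<circ> E \<circ> (W \<circ> P i)) + \<tau> ((W \<circ> N i) \<circ> E \<circ> (W \<circ> N i))"
    using state_sandwich_squares[OF st alg Cons.prems(1,2) PN(1,2)] DE by simp_all
  moreover have "foldr (\<circ>) (map f (i # L)) id = f i \<circ> D" "foldr (\<circ>) (map g (i # L)) id = g i \<circ> E"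
    by (simp_all add: D_def E_def)
  ultimately show ?case using cmod_diff_le_Re_add[OF IH[OF PN(1)] IH[OF PN(2)]] by (simp only:)
qed

lemma sorted_list_of_set_subset:
  assumes T: "finite T" and S: "S \<subseteq> T"
  shows "sorted_list_of_set S = filter (\<lambda>i. i \<in> S) (sorted_list_of_set T)"
proof (rule sorted_distinct_set_unique)
  have "finite S" using finite_subset[OF S T] .
  then show "sorted (sorted_list_of_set S)" "distinct (sorted_list_of_set S)"
    "set (sorted_list_of_set S) = set (filter (\<lambda>i. i \<in> S) (sorted_list_of_set T))"
    using S T by auto
  show "sorted (filter (\<lambda>i. i \<in> S) (sorted_list_of_set T))"
    by (rule sorted_wrt_filter) simp
  show "distinct (filter (\<lambda>i. i \<in> S) (sorted_list_of_set T))"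
    by simp
qed

lemma oprod_eq_on_support:
  assumes "finite T" "S \<subseteq> T" "\<forall>i\<in>T - S. g i = id"
  shows "oprod T g = oprod S g"
proof -
  have "foldr (\<circ>) (map g L) id = foldr (\<circ>) (map g (filter (\<lambda>i. i \<in> S) L)) id"
    if "set L \<subseteq> T" for L
    using that
  proof (induction L)
    case (Cons j L)
    then show ?case using assms(3) by (cases "j \<in> S") simp_all
  qed simp
  from this[of "sorted_list_of_set T"] show ?thesis
    unfolding oprod_def sorted_list_of_set_subset[OF assms(1,2)] using assms(1) by simp
qed

lemma state_oprod_square_decomp_bound:
  assumes st: "is_state A \<tau>" "op_algebra A" and "finite S"
    and B: "\<forall>i\<in>S. B i \<subseteq> A" "\<forall>i\<in>S. \<forall>j\<in>S. i \<noteq> j \<longrightarrow> B i \<subseteq> commutant (B j)"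
    and dec: "\<forall>i\<in>S. square_decomp (B i) (f i) (g i) (P i) (N i)"
  shows "cmod (\<tau> (oprod S f)) \<le> Re (\<tau> (oprod S g))"
proof -
  define F where "F = insert id (P ` S \<union> N ` S)"
  have "F \<subseteq> A" "\<forall>T\<in>F. hermitian T"
    using B(1) dec op_algebra_id[OF st(2)] hermitian_id by (auto simp: F_def square_decomp_def)
  moreover have "X \<circ> Y = Y \<circ> X" if "X \<in> {P i, N i}" "Y \<in> {P j, N j}" "i \<in> S" "j \<in> S" for X Y i j
  proof (cases "i = j")
    case True
    then show ?thesis using that dec by (auto simp: square_decomp_def)
  next
    case False
    then have "X \<in> commutant (B j)" "Y \<in> B j"
      using that B(2) dec by (auto simp: square_decomp_def)
    then show ?thesis by (rule commutantD)
  qed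
  then have "abelian F" by (auto simp: F_def abelian_def)
  ultimately have "commuting_hermitian A F" by (simp add: commuting_hermitian_def)
  then have "cmod (\<tau> (id \<circ> foldr (\<circ>) (map f (sorted_list_of_set S)) id \<circ> id))
      \<le> Re (\<tau> (id \<circ> foldr (\<circ>) (map g (sorted_list_of_set S)) id \<circ> id))"
    using dec \<open>finite S\<close>
    by (intro conjunct1[OF state_sandwich_diff_squares_bound[OF st, where W=id and P=P and N=N]])
        (auto simp: F_def square_decomp_def)
  then show ?thesis by (simp add: oprod_def)
qed

lemma MCvNA_model_join:
  assumes "MCvNA_model n m src M \<tau>"
  shows "is_state (join_vNA m M) \<tau>" "op_algebra (join_vNA m M)"
    "i \<in> {1..m} \<Longrightarrow> M i \<subseteq> join_vNA m M"
proof -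
  show "is_state (join_vNA m M) \<tau>" using assms by (simp add: MCvNA_model_def)
  show "op_algebra (join_vNA m M)"
    unfolding join_vNA_def by (rule op_algebra_commutant[OF commutant_bounded])
  assume i: "i \<in> {1..m}"
  then have "von_neumann_algebra (M i)"
    using assms unfolding MCvNA_model_def by blast
  then have "M i = commutant (commutant (M i))"
    by (metis von_neumann_algebra_def)
  also have "\<dots> \<subseteq> join_vNA m M"
    unfolding join_vNA_def by (rule commutant_antimono, rule commutant_antimono) (use i in blast)
  finally show "M i \<subseteq> join_vNA m M" .
qed

lemma MCvNA_square_decomp_nonneg:
  assumes "MCvNA_model n m src M \<tau>" "i \<in> {1..m}" "\<exists>P N. square_decomp (M i) f g P N"
  shows "Im (\<tau> g) = 0 \<and> 0 \<le> Re (\<tau> g)"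
proof -
  obtain P N where "square_decomp (M i) f g P N" using assms(3) by blast
  then show ?thesis
    using state_square_decomp_nonneg MCvNA_model_join[OF assms(1)] assms(2) by blast
qed

lemma MCvNA_oprod_bound:
  assumes model: "MCvNA_model n m src M \<tau>" and "2 \<le> h" "h \<le> h_max n m src"
    and R: "R \<in> Gamma n m src h"
    and dec: "\<forall>i\<in>{1..m}. \<exists>P N. square_decomp (M i) (f i) (if i \<in> R then g i else id) P N"
  shows "cmod (\<tau> (oprod {1..m} f)) \<le> (\<Prod>k\<in>R. Re (\<tau> (g k)))"
proof -
  define g' where "g' i = (if i \<in> R then g i else id)" for i
  have RS: "R \<subseteq> {1..m}" using R by (simp add: Gamma_def)
  obtain P N where PN: "\<forall>i\<in>{1..m}. square_decomp (M i) (f i) (g' i) (P i) (N i)"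
    using dec unfolding g'_def by metis
  have vN: "\<forall>i\<in>{1..m}. von_neumann_algebra (M i)"
    and cross: "\<forall>i\<in>{1..m}. \<forall>j\<in>{1..m}. i \<noteq> j \<longrightarrow> M i \<subseteq> commutant (M j)"
    and factor: "\<forall>A. (\<forall>k\<in>R. A k \<in> M k) \<longrightarrow> \<tau> (oprod R A) = (\<Prod>k\<in>R. \<tau> (A k))"
    using model assms(2,3) R unfolding MCvNA_model_def by blast+
  have "cmod (\<tau> (oprod {1..m} f)) \<le> Re (\<tau> (oprod {1..m} g'))"
    using MCvNA_model_join[OF model] cross PN
    by (intro state_oprod_square_decomp_bound[of "join_vNA m M"]) auto
  also have "oprod {1..m} g' = oprod R g'"
    by (rule oprod_eq_on_support[OF _ RS]) (simp_all add: g'_def)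
  also have "\<tau> (oprod R g') = (\<Prod>k\<in>R. \<tau> (g' k))"
  proof -
    have "g' k \<in> M k" if "k \<in> R" for k
    proof -
      have "P k \<in> M k" "N k \<in> M k" "g' k = op_add (P k \<circ> P k) (N k \<circ> N k)"
        using PN that RS by (auto simp: square_decomp_def)
      then show ?thesis
        using von_neumann_algebra_op_algebra vN that RS
        by (metis op_algebra_add op_algebra_comp subsetD)
    qed
    then show ?thesis using factor by blast
  qed
  also have "Re (\<Prod>k\<in>R. \<tau> (g' k)) = (\<Prod>k\<in>R. Re (\<tau> (g' k)))"
  proof (rule Re_prod_Reals)
    fix k assume "k \<in> R"
    then have k: "k \<in> {1..m}" using RS by blast
    show "\<tau> (g' k) \<in> \<real>"
      using MCvNA_square_decomp_nonneg[OF model k] bspec[OF PN k]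
      by (auto simp: complex_is_Real_iff)
  qed
  also have "\<dots> = (\<Prod>k\<in>R. Re (\<tau> (g k)))"
    by (simp add: g'_def)
  finally show ?thesis .
qed

lemma party_square_decomps:
  assumes M: "von_neumann_algebra M" and a: "observable M a" and b: "observable M b"
    and ab: "r \<Longrightarrow> a \<circ> b = b \<circ> a"
  shows "\<exists>P N. square_decomp M (if r then op_add a b else a)
      (if r then op_add id (a \<circ> b) else id) P N"
    and "\<exists>P N. square_decomp M (if r then op_diff a b else b)
      (if r then op_diff id (a \<circ> b) else id) P N"
  using observable_square_decomp[OF M] commuting_observables_square_decomp[OF M a b] a b ab
  by (cases r; simp)+

lemma MCvNA_correlator_square_decomps:
  assumes model: "MCvNA_model n m src M \<tau>" and R: "R \<subseteq> {1..m}" "\<forall>r\<in>R. abelian (M r)"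
    and obs: "\<forall>i\<in>{1..m}. observable (M i) (A0 i) \<and> observable (M i) (A1 i)"
  shows "\<forall>i\<in>{1..m}. \<exists>P N. square_decomp (M i) (if i \<in> R then op_add (A0 i) (A1 i) else A0 i)
      (if i \<in> R then op_add id (A0 i \<circ> A1 i) else id) P N"
    and "\<forall>i\<in>{1..m}. \<exists>P N. square_decomp (M i) (if i \<in> R then op_diff (A0 i) (A1 i) else A1 i)
      (if i \<in> R then op_diff id (A0 i \<circ> A1 i) else id) P N"
proof -
  have "(\<exists>P N. square_decomp (M i) (if i \<in> R then op_add (A0 i) (A1 i) else A0 i)
      (if i \<in> R then op_add id (A0 i \<circ> A1 i) else id) P N) \<and>
    (\<exists>P N. square_decomp (M i) (if i \<in> R then op_diff (A0 i) (A1 i) else A1 i)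
      (if i \<in> R then op_diff id (A0 i \<circ> A1 i) else id) P N)" if i: "i \<in> {1..m}" for i
  proof -
    have vN: "von_neumann_algebra (M i)" and a: "observable (M i) (A0 i)"
      and b: "observable (M i) (A1 i)"
      using model obs i by (auto simp: MCvNA_model_def)
    have ab: "i \<in> R \<Longrightarrow> A0 i \<circ> A1 i = A1 i \<circ> A0 i"
      using R(2) a b by (auto simp: abelian_def observable_def)
    show ?thesis using party_square_decomps[OF vN a b ab] by blast
  qed
  then show "\<forall>i\<in>{1..m}. \<exists>P N. square_decomp (M i) (if i \<in> R then op_add (A0 i) (A1 i) else A0 i)
      (if i \<in> R then op_add id (A0 i \<circ> A1 i) else id) P N"
    and "\<forall>i\<in>{1..m}. \<exists>P N. square_decomp (M i) (if i \<in> R then op_diff (A0 i) (A1 i) else A1 i)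
      (if i \<in> R then op_diff id (A0 i \<circ> A1 i) else id) P N"
    by blast+
qed

lemma MCvNA_complementary_weights:
  assumes model: "MCvNA_model n m src M \<tau>" and k: "k \<in> {1..m}"
    and a: "observable (M k) a" and b: "observable (M k) b" and ab: "a \<circ> b = b \<circ> a"
  shows "0 \<le> Re (\<tau> (op_add id (a \<circ> b))) \<and> 0 \<le> Re (\<tau> (op_diff id (a \<circ> b)))
    \<and> Re (\<tau> (op_add id (a \<circ> b))) + Re (\<tau> (op_diff id (a \<circ> b))) = 2"
proof -
  note join = MCvNA_model_join[OF model]
  have vN: "von_neumann_algebra (M k)" using model k by (simp add: MCvNA_model_def)
  have "a \<circ> b \<in> M k"
    using a b op_algebra_comp[OF von_neumann_algebra_op_algebra[OF vN]]
    by (simp add: observable_def)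
  then have "a \<circ> b \<in> join_vNA m M" "id \<in> join_vNA m M"
    using join(3)[OF k] op_algebra_id[OF join(2)] by auto
  then have "\<tau> (op_add id (a \<circ> b)) + \<tau> (op_diff id (a \<circ> b)) = 2 * \<tau> id"
    using state_add[OF join(1)] state_diff[OF join(1,2)] by simp
  then have "Re (\<tau> (op_add id (a \<circ> b))) + Re (\<tau> (op_diff id (a \<circ> b))) = 2"
    using join(1) by (simp add: is_state_def flip: plus_complex.sel)
  moreover have "0 \<le> Re (\<tau> (op_add id (a \<circ> b)))" "0 \<le> Re (\<tau> (op_diff id (a \<circ> b)))"
    using MCvNA_square_decomp_nonneg[OF model k] commuting_observables_square_decomp[OF vN a b ab]
    by blast+
  ultimately show ?thesis by blast
qed

lemma complementary_products_root_sum_le: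
  fixes \<alpha> \<beta> :: "'a \<Rightarrow> real" and x y :: real
  assumes R: "finite R" "card R = h" "h \<ge> 1"
    and \<alpha>\<beta>: "\<forall>k\<in>R. 0 \<le> \<alpha> k \<and> 0 \<le> \<beta> k \<and> \<alpha> k + \<beta> k = 2"
    and x: "0 \<le> x" "x \<le> (\<Prod>k\<in>R. \<alpha> k)" and y: "0 \<le> y" "y \<le> (\<Prod>k\<in>R. \<beta> k)"
  shows "x powr (1 / real h) + y powr (1 / real h) \<le> 2"
proof -
  have ne: "R \<noteq> {}" using R by auto
  have "x powr (1 / real h) \<le> (\<Prod>k\<in>R. \<alpha> k) powr (1 / real h)"
    by (rule powr_mono2) (use x R in auto)
  also have "\<dots> \<le> (\<Sum>k\<in>R. \<alpha> k / card R)"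
    using arith_geom_mean[OF R(1) ne, of \<alpha>] \<alpha>\<beta> R by auto
  finally have "x powr (1 / real h) \<le> (\<Sum>k\<in>R. \<alpha> k / card R)" .
  moreover have "y powr (1 / real h) \<le> (\<Prod>k\<in>R. \<beta> k) powr (1 / real h)"
    by (rule powr_mono2) (use y R in auto)
  moreover have "\<dots> \<le> (\<Sum>k\<in>R. \<beta> k / card R)"
    using arith_geom_mean[OF R(1) ne, of \<beta>] \<alpha>\<beta> R by auto
  moreover have "(\<Sum>k\<in>R. \<alpha> k / card R) + (\<Sum>k\<in>R. \<beta> k / card R) = (\<Sum>k\<in>R. 2 / card R)"
    using \<alpha>\<beta> by (simp add: sum.distrib[symmetric] add_divide_distrib[symmetric])
  moreover have "(\<Sum>k\<in>R. 2 / card R) = (2::real)" using ne R by simp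
  ultimately show ?thesis by linarith
qed

theorem theorem3p2:
  fixes n m h :: nat
    and src :: "nat \<Rightarrow> nat set"
    and M :: "nat \<Rightarrow> ('h::complex_hilbert_space \<Rightarrow> 'h) set"
    and \<tau> :: "('h \<Rightarrow> 'h) \<Rightarrow> complex"
    and R :: "nat set"
    and A0 A1 :: "nat \<Rightarrow> 'h \<Rightarrow> 'h"
  assumes "network n m src"
    and "MCvNA_model n m src M \<tau>"
    and "2 \<le> h" and "h \<le> h_max n m src"
    and "R \<in> Gamma n m src h"
    and "\<forall>r\<in>R. abelian (M r)"
    and "\<forall>i\<in>{1..m}. observable (M i) (A0 i) \<and> observable (M i) (A1 i)"
  shows "cmod (I_tau m \<tau> R A0 A1) powr (1 / real h)
           + cmod (J_tau m \<tau> R A0 A1) powr (1 / real h) \<le> 2"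
proof -
  have R: "R \<subseteq> {1..m}" "finite R" "card R = h"
    using assms(5) by (auto simp: Gamma_def intro: finite_subset)
  note decs = MCvNA_correlator_square_decomps[OF assms(2) R(1) assms(6,7)]
  have "cmod (I_tau m \<tau> R A0 A1) \<le> (\<Prod>k\<in>R. Re (\<tau> (op_add id (A0 k \<circ> A1 k))))"
    unfolding I_tau_def by (rule MCvNA_oprod_bound[OF assms(2-5) decs(1)])
  moreover have "cmod (J_tau m \<tau> R A0 A1) \<le> (\<Prod>k\<in>R. Re (\<tau> (op_diff id (A0 k \<circ> A1 k))))"
    unfolding J_tau_def by (rule MCvNA_oprod_bound[OF assms(2-5) decs(2)])
  moreover have "\<forall>k\<in>R. 0 \<le> Re (\<tau> (op_add id (A0 k \<circ> A1 k))) \<and> 0 \<le> Re (\<tau> (op_diff id (A0 k \<circ> A1 k)))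
      \<and> Re (\<tau> (op_add id (A0 k \<circ> A1 k))) + Re (\<tau> (op_diff id (A0 k \<circ> A1 k))) = 2"
    using MCvNA_complementary_weights[OF assms(2)] assms(6,7) R(1)
    by (auto simp: abelian_def observable_def)
  ultimately show ?thesis
    using assms(3) R by (intro complementary_products_root_sum_le) auto
qed

end
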